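(* Let $N=2^n$ and let $C=\sum_{k=0}^{d}c_k\mathcal{P}^k$ be an $N\times N$ circulant matrix. Then $C$, normalized by $K=\max_{z\in\mathbb{T}}|\sum_{k=0}^d c_kz^k|$ (i.e. $C/K$), can be implemented (as the top-left block, with respect to one ancilla qubit, of a unitary circuit) using $\mathcal{O}(d\log N+\log^2N)$ 1- and 2-qubit gates.
   Context: $\mathbb{T}=\{z\in\mathbb{C}:|z|=1\}$. $\mathcal{P}=\sum_{j=0}^{N-1}|j+1 \bmod N\rangle\langle j|$ is the cyclic permutation (cyclic shift) matrix on $n$ qubits. Gates are arbitrary 1- and 2-qubit unitaries. *)

theory Defs
  imports Complex_Main
begin

text \<open>Matrices of size m x m are represented as functions nat => nat => complex;
  only entries with indices < m are meaningful. A register of q qubits has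
  dimension 2^q; bit b of a basis index j is (j div 2^b) mod 2.\<close>

type_synonym cmat = "nat \<Rightarrow> nat \<Rightarrow> complex"

definition mat_mult :: "nat \<Rightarrow> cmat \<Rightarrow> cmat \<Rightarrow> cmat" where
  "mat_mult m A B = (\<lambda>i j. \<Sum>k<m. A i k * B k j)"

definition mat_id :: "nat \<Rightarrow> cmat" where
  "mat_id m = (\<lambda>i j. if i < m \<and> j < m \<and> i = j then 1 else 0)"

fun mat_pow :: "nat \<Rightarrow> cmat \<Rightarrow> nat \<Rightarrow> cmat" where
  "mat_pow m A 0 = mat_id m"
| "mat_pow m A (Suc k) = mat_mult m A (mat_pow m A k)"

definition unitary_mat :: "nat \<Rightarrow> cmat \<Rightarrow> bool" where
  "unitary_mat m U \<longleftrightarrow>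
     (\<forall>i<m. \<forall>j<m. (\<Sum>k<m. cnj (U k i) * U k j) = (if i = j then 1 else 0))"

definition bit :: "nat \<Rightarrow> nat \<Rightarrow> nat" where
  "bit b j = (j div 2 ^ b) mod 2"

definition one_qubit_gate :: "nat \<Rightarrow> nat \<Rightarrow> cmat \<Rightarrow> cmat" where
  "one_qubit_gate q a U = (\<lambda>i j.
     if i < 2 ^ q \<and> j < 2 ^ q \<and> (\<forall>b<q. b \<noteq> a \<longrightarrow> bit b i = bit b j)
     then U (bit a i) (bit a j) else 0)"

definition two_qubit_gate :: "nat \<Rightarrow> nat \<Rightarrow> nat \<Rightarrow> cmat \<Rightarrow> cmat" where
  "two_qubit_gate q a b U = (\<lambda>i j.
     if i < 2 ^ q \<and> j < 2 ^ q \<and> (\<forall>c<q. c \<noteq> a \<longrightarrow> c \<noteq> b \<longrightarrow> bit c i = bit c j)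
     then U (2 * bit a i + bit b i) (2 * bit a j + bit b j) else 0)"

definition elementary_gate :: "nat \<Rightarrow> cmat \<Rightarrow> bool" where
  "elementary_gate q G \<longleftrightarrow>
     (\<exists>a U. a < q \<and> unitary_mat 2 U \<and> G = one_qubit_gate q a U) \<or>
     (\<exists>a b U. a < q \<and> b < q \<and> a \<noteq> b \<and> unitary_mat 4 U \<and> G = two_qubit_gate q a b U)"

definition circuit_matrix :: "nat \<Rightarrow> cmat list \<Rightarrow> cmat" where
  "circuit_matrix q gs = foldr (mat_mult (2 ^ q)) gs (mat_id (2 ^ q))"

definition cyc_shift :: "nat \<Rightarrow> cmat" where
  "cyc_shift N = (\<lambda>i j. if i < N \<and> j < N \<and> i = (j + 1) mod N then 1 else 0)"

definition circulant :: "nat \<Rightarrow> nat \<Rightarrow> (nat \<Rightarrow> complex) \<Rightarrow> cmat" where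
  "circulant N d c = (\<lambda>i j. \<Sum>k\<le>d. c k * mat_pow N (cyc_shift N) k i j)"

definition circ_norm :: "nat \<Rightarrow> (nat \<Rightarrow> complex) \<Rightarrow> real" where
  "circ_norm d c = (SUP z\<in>{z::complex. cmod z = 1}. cmod (\<Sum>k\<le>d. c k * z ^ k))"

end

theory Submission
  imports Defs "HOL-Computational_Algebra.Fundamental_Theorem_Algebra"
begin

text \<open>A circulant matrix is diagonalised by the Fourier transform, \<open>C = F diag(p(\<omega> ^ k)) F\<^sup>*\<close>
  with \<open>p(z) = \<Sum>\<^sub>k c\<^sub>k z ^ k\<close> and \<open>\<omega> = exp(2\<pi>i / N)\<close>, and \<open>F\<close> takes \<open>O(log\<^sup>2 N)\<close> gates.
  The diagonal of \<open>P(\<omega> ^ k)\<close>, where \<open>P = p / K\<close> is bounded by \<open>1\<close> on the unit circle, is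
  block-encoded on one ancilla by quantum signal processing: by the Fejer--Riesz theorem there is
  a polynomial \<open>Q\<close> of degree \<open>d\<close> with \<open>|P|\<^sup>2 + |Q|\<^sup>2 = 1\<close> on the circle, and then \<open>(P, Q)\<^sup>T\<close>
  is the first column of \<open>R\<^sub>0 D(z) R\<^sub>1 \<dots> D(z) R\<^sub>d\<close> with unitary \<open>2 \<times> 2\<close> matrices \<open>R\<^sub>i\<close>
  and \<open>D(z) = diag(1, z)\<close>. For \<open>z = \<omega> ^ k\<close>, controlled on the register value \<open>k\<close>, each \<open>D(z)\<close>
  is a product of \<open>log N\<close> controlled phases, which gives \<open>O(d log N)\<close> further gates.\<close>

section \<open>Binary digits\<close>

lemma bit_less_2 [simp]: "bit b i < 2"
  by (simp add: bit_def)

lemma bit_0_or_1: "bit b i = 0 \<or> bit b i = 1"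
  unfolding bit_def by presburger

lemma mod_power_Suc_bit: "i mod 2 ^ Suc n = i mod 2 ^ n + bit n i * 2 ^ n"
proof -
  have "i mod (2 ^ n * 2) = 2 ^ n * (i div 2 ^ n mod 2) + i mod 2 ^ n"
    by (rule mod_mult2_eq)
  then show ?thesis
    by (simp add: bit_def power_Suc2 mult.commute)
qed

lemma mod_power_eq_sum_bits: "i mod 2 ^ n = (\<Sum>l<n. bit l i * 2 ^ l)"
proof (induction n)
  case (Suc n)
  then show ?case
    using mod_power_Suc_bit[of i n] by simp
qed simp

lemma eq_sum_bits: "i < 2 ^ n \<Longrightarrow> i = (\<Sum>l<n. bit l i * 2 ^ l)"
  using mod_power_eq_sum_bits[of i n] by simp

lemma bits_eq_imp_eq:
  assumes "i < 2 ^ q" "k < 2 ^ q" "\<forall>b<q. bit b i = bit b k"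
  shows "i = k"
  using eq_sum_bits[OF assms(1)] eq_sum_bits[OF assms(2)] assms(3) by simp

lemma bit_mod_power: "b < n \<Longrightarrow> bit b (i mod 2 ^ n) = bit b i"
proof -
  assume "b < n"
  then have split: "(2::nat) ^ n = 2 ^ b * 2 ^ (n - b)"
    by (simp flip: power_add)
  have "(i mod 2 ^ n) div 2 ^ b = i div 2 ^ b mod 2 ^ (n - b)"
    unfolding split mod_mult2_eq by simp
  moreover have "(2::nat) dvd 2 ^ (n - b)"
    using \<open>b < n\<close> by simp
  ultimately show ?thesis
    unfolding bit_def by (simp add: mod_mod_cancel)
qed

lemma bit_div_power: "bit b (i div 2 ^ n) = bit (b + n) i"
  by (simp add: bit_def power_add div_mult2_eq[symmetric] mult.commute)

lemma bit_eq_0_if_less_power: "i < 2 ^ n \<Longrightarrow> n \<le> b \<Longrightarrow> bit b i = 0"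
  by (metis bit_def div_less less_le_trans mod_0 one_le_numeral power_increasing)

lemma bit_concat:
  assumes "L < 2 ^ a" "x < 2"
  shows "bit b (L + x * 2 ^ a + H * 2 ^ Suc a) =
     (if b < a then bit b L else if b = a then x else bit (b - a - 1) H)"
proof -
  define T where "T = L + x * 2 ^ a + H * 2 ^ Suc a"
  have T: "T = L + 2 ^ a * (x + 2 * H)"
    unfolding T_def by (simp add: algebra_simps)
  consider "b < a" | "b = a" | "a < b"
    by linarith
  then show ?thesis
  proof cases
    case 1
    have "T mod 2 ^ a = L"
      unfolding T using assms by simp
    then show ?thesis
      using bit_mod_power[OF 1, of T] 1 by (simp add: T_def)
  next
    case 2
    have "T div 2 ^ a = x + 2 * H"
      unfolding T using assms by simp
    then show ?thesis
      using bit_div_power[of 0 T a] 2 assms by (simp add: T_def bit_def)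
  next
    case 3
    have "T div 2 ^ a div 2 = H"
      unfolding T using assms by simp
    then have "T div 2 ^ Suc a = H"
      by (metis div_mult2_eq power_Suc2)
    then show ?thesis
      using bit_div_power[of "b - a - 1" T "Suc a"] 3 by (simp add: T_def)
  qed
qed

definition upd_bit :: "nat \<Rightarrow> nat \<Rightarrow> nat \<Rightarrow> nat" where
  "upd_bit a x i = i mod 2 ^ a + x * 2 ^ a + (i div 2 ^ Suc a) * 2 ^ Suc a"

lemma upd_bit_self: "upd_bit a (bit a i) i = i"
proof -
  have "i = i mod 2 ^ Suc a + (i div 2 ^ Suc a) * 2 ^ Suc a"
    by (metis mod_div_mult_eq)
  then show ?thesis
    unfolding upd_bit_def mod_power_Suc_bit by simp
qed

lemma bit_upd_bit: "x < 2 \<Longrightarrow> bit b (upd_bit a x i) = (if b = a then x else bit b i)"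
  using bit_concat[of "i mod 2 ^ a" a x b "i div 2 ^ Suc a"]
    bit_concat[of "i mod 2 ^ a" a "bit a i" b "i div 2 ^ Suc a"]
  unfolding upd_bit_def[symmetric] upd_bit_self by auto

lemma upd_bit_less:
  assumes "i < 2 ^ q" "a < q" "x < 2"
  shows "upd_bit a x i < 2 ^ q"
proof -
  define H where "H = i div 2 ^ Suc a"
  have q: "(2::nat) ^ q = 2 ^ (q - Suc a) * 2 ^ Suc a"
    using assms by (metis Suc_leI le_add_diff_inverse2 power_add)
  have "H < 2 ^ (q - Suc a)"
    unfolding H_def using assms q by (simp add: div_less_iff_less_mult)
  then have high: "(H + 1) * 2 ^ Suc a \<le> 2 ^ q"
    unfolding q by (intro mult_le_mono1) simp
  have "x * 2 ^ a \<le> 2 ^ a"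
    using assms by simp
  moreover have "i mod 2 ^ a < 2 ^ a"
    by simp
  ultimately have "i mod 2 ^ a + x * 2 ^ a < 2 ^ Suc a"
    by (simp only: power_Suc)
  then have "upd_bit a x i < (H + 1) * 2 ^ Suc a"
    unfolding upd_bit_def H_def by (simp add: algebra_simps)
  with high show ?thesis
    by simp
qed

lemma eq_upd_bit_if_bits_agree:
  assumes "i < 2 ^ q" "k < 2 ^ q" "a < q" "\<forall>b<q. b \<noteq> a \<longrightarrow> bit b i = bit b k"
  shows "k = upd_bit a (bit a k) i"
  using assms upd_bit_less[OF assms(1,3) bit_less_2[of a k]]
  by (intro bits_eq_imp_eq[of _ q]) (auto simp: bit_upd_bit)

lemma bit_top_eq_1:
  assumes "2 ^ n \<le> k" "k < 2 ^ Suc n"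
  shows "bit n k = 1"
proof -
  have "k div 2 ^ n = 1"
    using assms by (simp add: div_nat_eqI)
  then show ?thesis
    by (simp add: bit_def)
qed

lemma bits_of_digit_sum:
  assumes "\<forall>m<n. dg m < 2"
  shows "(\<Sum>m<n. dg m * 2 ^ m) < 2 ^ n \<and> (\<forall>b<n. bit b (\<Sum>m<n. dg m * 2 ^ m) = dg b)"
  using assms
proof (induction n)
  case (Suc n)
  define x where "x = (\<Sum>m<n. dg m * 2 ^ m)"
  have IH: "x < 2 ^ n" "\<forall>b<n. bit b x = dg b"
    using Suc unfolding x_def by auto
  have top: "dg n < 2"
    using Suc.prems by simp
  then have "dg n * 2 ^ n \<le> 2 ^ n"
    using less_2_cases_iff[of "dg n"] by auto
  then have "x + dg n * 2 ^ n < 2 ^ Suc n"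
    using IH(1) unfolding power_Suc by linarith
  moreover have "bit b (x + dg n * 2 ^ n) = dg b" if "b < Suc n" for b
  proof (cases "b < n")
    case True
    have "(x + dg n * 2 ^ n) mod 2 ^ n = x"
      using IH by simp
    then show ?thesis
      using bit_mod_power[OF True, of "x + dg n * 2 ^ n"] IH True by simp
  next
    case False
    then have "b = n"
      using that by simp
    have "(x + dg n * 2 ^ n) div 2 ^ n = dg n"
      using IH by simp
    then show ?thesis
      using \<open>b = n\<close> top by (simp add: bit_def)
  qed
  ultimately show ?case
    unfolding x_def by simp
qed simp

text \<open>The QFT circuit below outputs the Fourier coefficients in bit-reversed order.\<close>

definition bitrev :: "nat \<Rightarrow> nat \<Rightarrow> nat" where
  "bitrev n k = (\<Sum>m<n. bit m k * 2 ^ (n - 1 - m))"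

lemma bitrev_reversed_sum: "bitrev n k = (\<Sum>m<n. bit (n - Suc m) k * 2 ^ m)"
proof -
  have "bitrev n k = (\<Sum>m<n. bit (n - Suc m) k * 2 ^ (n - 1 - (n - Suc m)))"
    unfolding bitrev_def by (rule sum.nat_diff_reindex[symmetric])
  also have "\<dots> = (\<Sum>m<n. bit (n - Suc m) k * 2 ^ m)"
    by (rule sum.cong) auto
  finally show ?thesis .
qed

lemma bitrev_bits: "bitrev n k < 2 ^ n \<and> (\<forall>b<n. bit b (bitrev n k) = bit (n - Suc b) k)"
  unfolding bitrev_reversed_sum by (rule bits_of_digit_sum) simp

lemma bitrev_bitrev: "k < 2 ^ n \<Longrightarrow> bitrev n (bitrev n k) = k"
  by (rule bits_eq_imp_eq[of _ n]) (use bitrev_bits[of n] in \<open>auto simp: Suc_diff_Suc\<close>)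

lemma bij_betw_bitrev: "bij_betw (bitrev n) {..<2 ^ n} {..<2 ^ n}"
  by (rule bij_betw_byWitness[where f'="bitrev n"]) (auto simp: bitrev_bitrev bitrev_bits)

lemma bitrev_mod_power: "bitrev n (i mod 2 ^ n) = bitrev n i"
  unfolding bitrev_def by (rule sum.cong) (auto simp: bit_mod_power)

section \<open>Matrices and circuits\<close>

text \<open>Matrices are total functions, so identities such as \<open>mat_id m * Y = Y\<close> need \<open>Y\<close> to vanish
  outside the index range \<open>{..<m}\<close>: its rows (\<open>row_bounded\<close>) or its columns (\<open>col_bounded\<close>).\<close>

definition row_bounded :: "nat \<Rightarrow> cmat \<Rightarrow> bool" where
  "row_bounded m A \<longleftrightarrow> (\<forall>i j. m \<le> i \<longrightarrow> A i j = 0)"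

definition col_bounded :: "nat \<Rightarrow> cmat \<Rightarrow> bool" where
  "col_bounded m A \<longleftrightarrow> (\<forall>i j. m \<le> j \<longrightarrow> A i j = 0)"

definition adjoint :: "cmat \<Rightarrow> cmat" where
  "adjoint A = (\<lambda>i j. cnj (A j i))"

lemma mat_mult_assoc: "mat_mult m A (mat_mult m B C) = mat_mult m (mat_mult m A B) C"
proof (intro ext)
  fix i j
  show "mat_mult m A (mat_mult m B C) i j = mat_mult m (mat_mult m A B) C i j"
    unfolding mat_mult_def by (simp add: sum_distrib_left sum_distrib_right mult.assoc) (rule sum.swap)
qed

lemma mat_mult_id_left: "row_bounded m Y \<Longrightarrow> mat_mult m (mat_id m) Y = Y"
proof (intro ext)
  fix i j
  assume "row_bounded m Y"
  moreover have "(\<Sum>k<m. mat_id m i k * Y k j) = (\<Sum>k<m. if k = i then (if i < m then Y i j else 0) else 0)"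
    by (rule sum.cong) (auto simp: mat_id_def)
  ultimately show "mat_mult m (mat_id m) Y i j = Y i j"
    by (simp add: mat_mult_def row_bounded_def)
qed

lemma mat_mult_id_right: "col_bounded m Y \<Longrightarrow> mat_mult m Y (mat_id m) = Y"
proof (intro ext)
  fix i j
  assume "col_bounded m Y"
  moreover have "(\<Sum>k<m. Y i k * mat_id m k j) = (\<Sum>k<m. if k = j then (if j < m then Y i j else 0) else 0)"
    by (rule sum.cong) (auto simp: mat_id_def)
  ultimately show "mat_mult m Y (mat_id m) i j = Y i j"
    by (simp add: mat_mult_def col_bounded_def)
qed

lemma row_bounded_mat_mult: "row_bounded m A \<Longrightarrow> row_bounded m (mat_mult m A B)"
  by (simp add: row_bounded_def mat_mult_def)

lemma row_bounded_mat_mult_eq_0: "row_bounded m A \<Longrightarrow> m \<le> i \<Longrightarrow> mat_mult m A B i j = 0"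
  by (simp add: row_bounded_def mat_mult_def)

lemma row_bounded_mat_id: "row_bounded m (mat_id m)"
  by (simp add: row_bounded_def mat_id_def)

lemma row_bounded_adjoint: "col_bounded m A \<Longrightarrow> row_bounded m (adjoint A)"
  by (simp add: row_bounded_def col_bounded_def adjoint_def)

lemma col_bounded_adjoint: "row_bounded m A \<Longrightarrow> col_bounded m (adjoint A)"
  by (simp add: row_bounded_def col_bounded_def adjoint_def)

lemma adjoint_mat_mult: "adjoint (mat_mult m A B) = mat_mult m (adjoint B) (adjoint A)"
  by (intro ext) (simp add: adjoint_def mat_mult_def mult.commute)

lemma adjoint_mat_id: "adjoint (mat_id m) = mat_id m"
  by (intro ext) (auto simp: adjoint_def mat_id_def)

lemma row_bounded_one_qubit_gate: "row_bounded (2 ^ q) (one_qubit_gate q a U)"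
  by (simp add: row_bounded_def one_qubit_gate_def)

lemma col_bounded_one_qubit_gate: "col_bounded (2 ^ q) (one_qubit_gate q a U)"
  by (simp add: col_bounded_def one_qubit_gate_def)

lemma row_bounded_two_qubit_gate: "row_bounded (2 ^ q) (two_qubit_gate q a b U)"
  by (simp add: row_bounded_def two_qubit_gate_def)

lemma col_bounded_two_qubit_gate: "col_bounded (2 ^ q) (two_qubit_gate q a b U)"
  by (simp add: col_bounded_def two_qubit_gate_def)

lemma adjoint_one_qubit_gate: "adjoint (one_qubit_gate q a U) = one_qubit_gate q a (adjoint U)"
  by (intro ext) (auto simp: adjoint_def one_qubit_gate_def)

lemma adjoint_two_qubit_gate: "adjoint (two_qubit_gate q a b U) = two_qubit_gate q a b (adjoint U)"
  by (intro ext) (auto simp: adjoint_def two_qubit_gate_def)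

lemma foldr_mat_mult:
  "row_bounded m Y \<Longrightarrow> foldr (mat_mult m) gs Y = mat_mult m (foldr (mat_mult m) gs (mat_id m)) Y"
  by (induction gs) (simp_all add: mat_mult_id_left mat_mult_assoc)

lemma row_bounded_circuit_matrix:
  "\<forall>g\<in>set gs. row_bounded (2 ^ q) g \<Longrightarrow> row_bounded (2 ^ q) (circuit_matrix q gs)"
  unfolding circuit_matrix_def by (induction gs) (auto simp: row_bounded_mat_id row_bounded_mat_mult)

lemma circuit_matrix_single: "col_bounded (2 ^ q) g \<Longrightarrow> circuit_matrix q [g] = g"
  by (simp add: circuit_matrix_def mat_mult_id_right)

lemma circuit_matrix_append:
  "\<forall>g\<in>set hs. row_bounded (2 ^ q) g \<Longrightarrow>
   circuit_matrix q (gs @ hs) = mat_mult (2 ^ q) (circuit_matrix q gs) (circuit_matrix q hs)"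
  using foldr_mat_mult[OF row_bounded_circuit_matrix, of hs q gs]
  by (simp add: circuit_matrix_def)

lemma adjoint_circuit_matrix:
  "\<forall>g\<in>set gs. row_bounded (2 ^ q) g \<and> col_bounded (2 ^ q) g \<Longrightarrow>
   adjoint (circuit_matrix q gs) = circuit_matrix q (rev (map adjoint gs))"
proof (induction gs)
  case Nil
  then show ?case
    by (simp add: circuit_matrix_def adjoint_mat_id)
next
  case (Cons g gs)
  then have g: "row_bounded (2 ^ q) g" "col_bounded (2 ^ q) g"
    by auto
  have "adjoint (circuit_matrix q (g # gs)) =
      mat_mult (2 ^ q) (adjoint (circuit_matrix q gs)) (adjoint g)"
    by (simp add: circuit_matrix_def adjoint_mat_mult)
  also have "\<dots> = mat_mult (2 ^ q) (circuit_matrix q (rev (map adjoint gs))) (circuit_matrix q [adjoint g])"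
    using Cons g by (simp add: circuit_matrix_single col_bounded_adjoint)
  also have "\<dots> = circuit_matrix q (rev (map adjoint gs) @ [adjoint g])"
    using g by (simp add: circuit_matrix_append row_bounded_adjoint)
  finally show ?case
    by simp
qed

lemma one_qubit_gate_mult:
  assumes "a < q" "i < 2 ^ q"
  shows "mat_mult (2 ^ q) (one_qubit_gate q a U) M i j = (\<Sum>x<2. U (bit a i) x * M (upd_bit a x i) j)"
proof -
  let ?f = "\<lambda>k. one_qubit_gate q a U i k * M k j"
  define S where "S = (\<lambda>x. upd_bit a x i) ` {..<2}"
  have "S \<subseteq> {..<2 ^ q}"
    unfolding S_def using upd_bit_less[OF assms(2,1)] by auto
  moreover have "?f k = 0" if "k \<in> {..<2 ^ q} - S" for k
  proof -
    have "k \<noteq> upd_bit a (bit a k) i"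
      using that unfolding S_def by (metis Diff_iff bit_less_2 image_eqI lessThan_iff)
    then have "\<not> (\<forall>b<q. b \<noteq> a \<longrightarrow> bit b i = bit b k)"
      using that eq_upd_bit_if_bits_agree[OF assms(2) _ assms(1), of k] by auto
    then show ?thesis
      unfolding one_qubit_gate_def by auto
  qed
  ultimately have "mat_mult (2 ^ q) (one_qubit_gate q a U) M i j = sum ?f S"
    unfolding mat_mult_def by (intro sum.mono_neutral_right) auto
  also have "\<dots> = (\<Sum>x<2. ?f (upd_bit a x i))"
  proof -
    have "inj_on (\<lambda>x. upd_bit a x i) {..<2}"
      by (rule inj_onI) (metis bit_upd_bit lessThan_iff)
    then show ?thesis
      unfolding S_def by (simp add: sum.reindex)
  qed
  also have "\<dots> = (\<Sum>x<2. U (bit a i) x * M (upd_bit a x i) j)"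
    using assms upd_bit_less[OF assms(2,1)] by (intro sum.cong) (auto simp: one_qubit_gate_def bit_upd_bit)
  finally show ?thesis .
qed

lemma two_qubit_gate_diag_mult:
  assumes "a < q" "b < q" "a \<noteq> b" "i < 2 ^ q" "\<And>x y. x \<noteq> y \<Longrightarrow> U x y = 0"
  shows "mat_mult (2 ^ q) (two_qubit_gate q a b U) M i j =
    U (2 * bit a i + bit b i) (2 * bit a i + bit b i) * M i j"
proof -
  let ?f = "\<lambda>k. two_qubit_gate q a b U i k * M k j"
  have "?f k = 0" if k: "k < 2 ^ q" "k \<noteq> i" for k
  proof (cases "\<forall>c<q. c \<noteq> a \<longrightarrow> c \<noteq> b \<longrightarrow> bit c i = bit c k")
    case True
    have "2 * bit a i + bit b i \<noteq> 2 * bit a k + bit b k"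
    proof
      assume "2 * bit a i + bit b i = 2 * bit a k + bit b k"
      then have "bit a i = bit a k" "bit b i = bit b k"
        using bit_0_or_1[of a i] bit_0_or_1[of b i] bit_0_or_1[of a k] bit_0_or_1[of b k] by auto
      then have "\<forall>c<q. bit c i = bit c k"
        using True by metis
      then show False
        using bits_eq_imp_eq[of i q k] k assms by auto
    qed
    then show ?thesis
      by (simp add: two_qubit_gate_def assms(5))
  qed (auto simp: two_qubit_gate_def)
  then have "mat_mult (2 ^ q) (two_qubit_gate q a b U) M i j = sum ?f {i}"
    unfolding mat_mult_def using assms(4) by (intro sum.mono_neutral_right) auto
  then show ?thesis
    using assms by (simp add: two_qubit_gate_def)
qed

lemma elementary_one_qubit_gate:
  "a < q \<Longrightarrow> unitary_mat 2 U \<Longrightarrow> elementary_gate q (one_qubit_gate q a U)"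
  unfolding elementary_gate_def by blast

lemma elementary_two_qubit_gate:
  "a < q \<Longrightarrow> b < q \<Longrightarrow> a \<noteq> b \<Longrightarrow> unitary_mat 4 U \<Longrightarrow> elementary_gate q (two_qubit_gate q a b U)"
  unfolding elementary_gate_def by blast

section \<open>Roots of unity\<close>

definition omega :: "nat \<Rightarrow> complex" where
  "omega n = cis (2 * pi / 2 ^ n)"

definition zeta :: "nat \<Rightarrow> complex" where
  "zeta n = cnj (omega n)"

lemma omega_power: "omega n ^ a = cis (2 * pi * real a / 2 ^ n)"
  unfolding omega_def DeMoivre by (simp add: ac_simps)

lemma cmod_omega [simp]: "cmod (omega n) = 1"
  by (simp add: omega_def)

lemma omega_neq_0 [simp]: "omega n \<noteq> 0"
  by (simp add: omega_def)

lemma cmod_zeta [simp]: "cmod (zeta n) = 1"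
  by (simp add: zeta_def)

lemma cnj_omega_mult: "cnj (omega n) * omega n = 1"
  unfolding omega_def cis_cnj cis_mult by simp

lemma omega_power_2n: "omega n ^ 2 ^ n = 1"
  unfolding omega_power by simp

lemma zeta_power_mult_2n: "zeta n ^ (a * 2 ^ n) = 1"
  by (simp add: zeta_def power_mult omega_power_2n mult.commute[of a] flip: complex_cnj_power)

lemma zeta_power_half: "1 \<le> n \<Longrightarrow> zeta n ^ 2 ^ (n - 1) = -1"
proof -
  assume "1 \<le> n"
  then have "(2::real) ^ n = 2 * 2 ^ (n - 1)"
    by (metis Suc_diff_le diff_Suc_1 power_Suc)
  then have "omega n ^ 2 ^ (n - 1) = cis pi"
    unfolding omega_power by simp
  then show ?thesis
    by (simp add: zeta_def flip: complex_cnj_power)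
qed

lemma omega_power_mod: "omega n ^ a = omega n ^ (a mod 2 ^ n)"
proof -
  have "omega n ^ a = omega n ^ (a mod 2 ^ n + 2 ^ n * (a div 2 ^ n))"
    by simp
  also have "\<dots> = omega n ^ (a mod 2 ^ n) * (omega n ^ 2 ^ n) ^ (a div 2 ^ n)"
    by (simp only: power_add power_mult)
  finally show ?thesis
    by (simp add: omega_power_2n)
qed

lemma omega_power_eq_1:
  assumes "t < 2 ^ n" "omega n ^ t = 1"
  shows "t = 0"
proof -
  have "cos (2 * pi * real t / 2 ^ n) = 1"
    using assms(2) unfolding omega_power by (metis cis.sel(1) one_complex.sel(1))
  then obtain x :: int where x: "2 * pi * real t / 2 ^ n = real_of_int x * 2 * pi"
    using cos_one_2pi_int by blast
  then have "real t / 2 ^ n = real_of_int x"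
    by (simp add: field_simps)
  moreover have "0 \<le> real t / 2 ^ n" "real t / 2 ^ n < 1"
    using assms(1) by (auto simp: field_simps)
  ultimately have "x = 0"
    by linarith
  then show ?thesis
    using x by simp
qed

lemma omega_power_inj:
  assumes "a < 2 ^ n" "b < 2 ^ n" "omega n ^ a = omega n ^ b"
  shows "a = b"
proof -
  have "a = b" if ab: "a \<le> b" "b < 2 ^ n" "omega n ^ a = omega n ^ b" for a b
  proof -
    have "omega n ^ a * omega n ^ (b - a) = omega n ^ b"
      using ab(1) by (simp flip: power_add)
    also have "\<dots> = omega n ^ a * 1"
      using ab(3) by simp
    finally have "omega n ^ a * omega n ^ (b - a) = omega n ^ a * 1" .
    then have "omega n ^ (b - a) = 1"
      by simp
    then show "a = b"
      using omega_power_eq_1[of "b - a" n] ab by linarith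
  qed
  then show ?thesis
    using assms by (metis nat_le_linear)
qed

lemma sum_roots_of_unity:
  assumes "i < 2 ^ n"
  shows "(\<Sum>k<2 ^ n. cnj (omega n) ^ (i * k) * omega n ^ (t * k)) = (if t mod 2 ^ n = i then 2 ^ n else 0)"
proof -
  define w where "w = cnj (omega n) ^ i * omega n ^ t"
  have sum_w: "(\<Sum>k<2 ^ n. cnj (omega n) ^ (i * k) * omega n ^ (t * k)) = (\<Sum>k<2 ^ n. w ^ k)"
    unfolding w_def by (simp add: power_mult power_mult_distrib)
  have "w ^ 2 ^ n = 1"
    unfolding w_def power_mult_distrib
    by (simp add: power_mult[symmetric] mult.commute[of i] mult.commute[of t] power_mult omega_power_2n
        flip: complex_cnj_power)
  moreover have "w = 1 \<longleftrightarrow> omega n ^ (t mod 2 ^ n) = omega n ^ i"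
  proof -
    have "omega n ^ t = omega n ^ t * (cnj (omega n) * omega n) ^ i"
      by (simp add: cnj_omega_mult)
    also have "\<dots> = w * omega n ^ i"
      unfolding w_def by (simp add: power_mult_distrib ac_simps)
    finally have "omega n ^ t = w * omega n ^ i" .
    then show ?thesis
      using omega_power_mod[of n t] by auto
  qed
  then have "w = 1 \<longleftrightarrow> t mod 2 ^ n = i"
    using omega_power_inj[of "t mod 2 ^ n" n i] assms by auto
  ultimately show ?thesis
    unfolding sum_w sum_gp_strict by auto
qed

lemma infinite_unit_circle: "infinite {z::complex. cmod z = 1}"
proof
  assume fin: "finite {z::complex. cmod z = 1}"
  define C where "C = card {z::complex. cmod z = 1}"
  have "inj_on (\<lambda>k. omega C ^ k) {..<2 ^ C}"
    using omega_power_inj by (auto simp: inj_on_def)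
  moreover have "(\<lambda>k. omega C ^ k) ` {..<2 ^ C} \<subseteq> {z. cmod z = 1}"
    by (auto simp: norm_power)
  ultimately have "card {..<(2::nat) ^ C} \<le> C"
    unfolding C_def by (metis card_image card_mono fin)
  then show False
    using less_exp[of C] by simp
qed

section \<open>The quantum Fourier transform circuit\<close>

definition inv_sqrt2 :: complex where
  "inv_sqrt2 = complex_of_real (1 / sqrt 2)"

definition hadamard :: cmat where
  "hadamard = (\<lambda>x y. (if x = 1 \<and> y = 1 then -1 else 1) * inv_sqrt2)"

definition cphase :: "complex \<Rightarrow> cmat" where
  "cphase \<phi> = (\<lambda>x y. if x = y then (if x = 3 then \<phi> else 1) else 0)"

lemma cnj_inv_sqrt2 [simp]: "cnj inv_sqrt2 = inv_sqrt2"
  by (simp add: inv_sqrt2_def)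

lemma inv_sqrt2_square: "inv_sqrt2 * inv_sqrt2 = 1 / 2"
proof -
  have "(1 / sqrt 2) * (1 / sqrt 2) = (1 / 2 :: real)"
    by (simp add: divide_simps)
  then show ?thesis
    unfolding inv_sqrt2_def by (metis of_real_mult of_real_divide of_real_1 of_real_numeral)
qed

lemma unitary_hadamard: "unitary_mat 2 hadamard"
proof -
  have "inv_sqrt2 * (inv_sqrt2 * 2) = 1"
    by (simp add: mult.assoc[symmetric] inv_sqrt2_square)
  then show ?thesis
    unfolding unitary_mat_def hadamard_def
    by (auto simp: numeral_2_eq_2 less_Suc_eq inv_sqrt2_square algebra_simps)
qed

lemma unitary_cphase: "cmod \<phi> = 1 \<Longrightarrow> unitary_mat 4 (cphase \<phi>)"
  using complex_norm_square[of \<phi>]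
  unfolding unitary_mat_def cphase_def by (auto simp: numeral_eq_Suc less_Suc_eq mult.commute)

lemma adjoint_hadamard: "adjoint hadamard = hadamard"
  by (intro ext) (simp add: adjoint_def hadamard_def)

lemma adjoint_cphase: "adjoint (cphase \<phi>) = cphase (cnj \<phi>)"
  by (intro ext) (simp add: adjoint_def cphase_def)

lemma cphase_diag_entry: "cphase \<phi> (2 * bit b i + bit u i) (2 * bit b i + bit u i) = \<phi> ^ (bit b i * bit u i)"
  using bit_0_or_1[of b i] bit_0_or_1[of u i] by (elim disjE) (simp_all add: cphase_def)

text \<open>Qubit \<open>n\<close> is the ancilla. The gate list is in order of application, so its circuit matrix
  is that of its reversal.\<close>

definition qft_hadamard_gate :: "nat \<Rightarrow> nat \<Rightarrow> cmat" where
  "qft_hadamard_gate n b = one_qubit_gate (Suc n) b hadamard"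

definition qft_cphase_gate :: "nat \<Rightarrow> nat \<Rightarrow> nat \<Rightarrow> cmat" where
  "qft_cphase_gate n b u = two_qubit_gate (Suc n) b u (cphase (zeta n ^ 2 ^ (n - 1 - u + b)))"

definition qft_block :: "nat \<Rightarrow> nat \<Rightarrow> cmat list" where
  "qft_block n b = qft_hadamard_gate n b # map (qft_cphase_gate n b) [Suc b..<n]"

definition qft_gates :: "nat \<Rightarrow> cmat list" where
  "qft_gates n = concat (map (qft_block n) [0..<n])"

text \<open>\<open>qft_stage n b\<close> is the matrix of the first \<open>b\<close> blocks, and \<open>qft_stage_partial n b u\<close> that
  of the first \<open>b\<close> blocks followed by the Hadamard gate and the controlled phases with the qubits
  \<open>b + 1, \<dots>, u - 1\<close> of block \<open>b\<close>. Each processed row qubit \<open>l\<close> contributes a factor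
  \<open>zeta n ^ (bit l i * qft_exponent n l n k)\<close>, as in the product formula of the Fourier transform.\<close>

definition qft_exponent :: "nat \<Rightarrow> nat \<Rightarrow> nat \<Rightarrow> nat \<Rightarrow> nat" where
  "qft_exponent n b u k = (\<Sum>m\<in>{b..<u}. bit m k * 2 ^ (n - 1 - m + b))"

definition qft_stage :: "nat \<Rightarrow> nat \<Rightarrow> cmat" where
  "qft_stage n b = (\<lambda>i k.
     if i < 2 ^ Suc n \<and> k < 2 ^ Suc n \<and> (\<forall>l. b \<le> l \<and> l < Suc n \<longrightarrow> bit l i = bit l k)
     then (\<Prod>l<b. zeta n ^ (bit l i * qft_exponent n l n k)) * inv_sqrt2 ^ b else 0)"

definition qft_stage_partial :: "nat \<Rightarrow> nat \<Rightarrow> nat \<Rightarrow> cmat" where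
  "qft_stage_partial n b u = (\<lambda>i k.
     if i < 2 ^ Suc n \<and> k < 2 ^ Suc n \<and> (\<forall>l. b < l \<and> l < Suc n \<longrightarrow> bit l i = bit l k)
     then (\<Prod>l<b. zeta n ^ (bit l i * qft_exponent n l n k)) * zeta n ^ (bit b i * qft_exponent n b u k)
       * inv_sqrt2 ^ Suc b
     else 0)"

lemma qft_stage_0: "qft_stage n 0 = mat_id (2 ^ Suc n)"
proof (intro ext)
  fix i k
  show "qft_stage n 0 i k = mat_id (2 ^ Suc n) i k"
  proof (cases "i < 2 ^ Suc n \<and> k < 2 ^ Suc n")
    case True
    then have "(\<forall>l. 0 \<le> l \<and> l < Suc n \<longrightarrow> bit l i = bit l k) \<longleftrightarrow> i = k"
      using bits_eq_imp_eq[of i "Suc n" k] by auto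
    then show ?thesis
      using True by (simp add: qft_stage_def mat_id_def)
  qed (auto simp: qft_stage_def mat_id_def)
qed

lemma qft_stage_upd_bit:
  assumes "i < 2 ^ Suc n" "b < Suc n" "x < 2"
  shows "qft_stage n b (upd_bit b x i) k =
    (if x = bit b k \<and> k < 2 ^ Suc n \<and> (\<forall>l. b < l \<and> l < Suc n \<longrightarrow> bit l i = bit l k)
     then (\<Prod>l<b. zeta n ^ (bit l i * qft_exponent n l n k)) * inv_sqrt2 ^ b else 0)"
proof -
  have "(\<forall>l. b \<le> l \<and> l < Suc n \<longrightarrow> bit l (upd_bit b x i) = bit l k) \<longleftrightarrow>
      x = bit b k \<and> (\<forall>l. b < l \<and> l < Suc n \<longrightarrow> bit l i = bit l k)"
    using assms(2,3) by (auto simp: bit_upd_bit)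
  moreover have "(\<Prod>l<b. zeta n ^ (bit l (upd_bit b x i) * qft_exponent n l n k)) =
      (\<Prod>l<b. zeta n ^ (bit l i * qft_exponent n l n k))"
    using assms(3) by (intro prod.cong) (auto simp: bit_upd_bit)
  ultimately show ?thesis
    unfolding qft_stage_def using upd_bit_less[OF assms] by auto
qed

text \<open>The Hadamard sign \<open>(-1) ^ (y * x)\<close> is \<open>zeta n ^ (y * x * 2 ^ (n - 1))\<close>.\<close>

lemma hadamard_eq_phase:
  assumes "1 \<le> n" "b < n" "y < 2"
  shows "hadamard y (bit b k) = zeta n ^ (y * qft_exponent n b (Suc b) k) * inv_sqrt2"
proof -
  have "qft_exponent n b (Suc b) k = bit b k * 2 ^ (n - 1)"
    unfolding qft_exponent_def using assms by simp
  moreover have "bit b k = 0 \<or> bit b k = 1"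
    by (rule bit_0_or_1)
  moreover have "y = 0 \<or> y = 1"
    using assms by auto
  ultimately show ?thesis
    unfolding hadamard_def using zeta_power_half[OF assms(1)] by auto
qed

lemma qft_hadamard_step:
  assumes "1 \<le> n" "b < n"
  shows "mat_mult (2 ^ Suc n) (qft_hadamard_gate n b) (qft_stage n b) = qft_stage_partial n b (Suc b)"
proof (intro ext)
  fix i k
  show "mat_mult (2 ^ Suc n) (qft_hadamard_gate n b) (qft_stage n b) i k = qft_stage_partial n b (Suc b) i k"
  proof (cases "i < 2 ^ Suc n")
    case False
    then show ?thesis
      unfolding qft_hadamard_gate_def
      by (simp add: row_bounded_mat_mult_eq_0 row_bounded_one_qubit_gate qft_stage_partial_def
          del: power_Suc)
  next
    case True
    have b: "b < Suc n"
      using assms by simp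
    have "mat_mult (2 ^ Suc n) (qft_hadamard_gate n b) (qft_stage n b) i k =
        (\<Sum>x<2. hadamard (bit b i) x * qft_stage n b (upd_bit b x i) k)"
      unfolding qft_hadamard_gate_def by (rule one_qubit_gate_mult[OF b True])
    also have "\<dots> = (\<Sum>x<2. if x = bit b k then hadamard (bit b i) x *
        (if k < 2 ^ Suc n \<and> (\<forall>l. b < l \<and> l < Suc n \<longrightarrow> bit l i = bit l k)
         then (\<Prod>l<b. zeta n ^ (bit l i * qft_exponent n l n k)) * inv_sqrt2 ^ b else 0) else 0)"
      by (intro sum.cong) (auto simp: qft_stage_upd_bit[OF True b] simp del: power_Suc)
    also have "\<dots> = hadamard (bit b i) (bit b k) *
        (if k < 2 ^ Suc n \<and> (\<forall>l. b < l \<and> l < Suc n \<longrightarrow> bit l i = bit l k)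
         then (\<Prod>l<b. zeta n ^ (bit l i * qft_exponent n l n k)) * inv_sqrt2 ^ b else 0)"
      by (simp add: sum.delta' del: power_Suc)
    also have "\<dots> = qft_stage_partial n b (Suc b) i k"
      unfolding qft_stage_partial_def hadamard_eq_phase[OF assms bit_less_2] using True
      by (auto simp: ac_simps)
    finally show ?thesis .
  qed
qed

lemma qft_cphase_step:
  assumes "b < u" "u < n"
  shows "mat_mult (2 ^ Suc n) (qft_cphase_gate n b u) (qft_stage_partial n b u) = qft_stage_partial n b (Suc u)"
proof (intro ext)
  fix i k
  let ?\<phi> = "zeta n ^ 2 ^ (n - 1 - u + b)"
  show "mat_mult (2 ^ Suc n) (qft_cphase_gate n b u) (qft_stage_partial n b u) i k =
    qft_stage_partial n b (Suc u) i k"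
  proof (cases "i < 2 ^ Suc n")
    case False
    then show ?thesis
      unfolding qft_cphase_gate_def
      by (simp add: row_bounded_mat_mult_eq_0 row_bounded_two_qubit_gate qft_stage_partial_def
          del: power_Suc)
  next
    case True
    have "mat_mult (2 ^ Suc n) (qft_cphase_gate n b u) (qft_stage_partial n b u) i k =
        ?\<phi> ^ (bit b i * bit u i) * qft_stage_partial n b u i k"
      unfolding qft_cphase_gate_def cphase_diag_entry[symmetric]
      by (rule two_qubit_gate_diag_mult) (use assms True in \<open>auto simp: cphase_def\<close>)
    also have "\<dots> = qft_stage_partial n b (Suc u) i k"
    proof (cases "k < 2 ^ Suc n \<and> (\<forall>l. b < l \<and> l < Suc n \<longrightarrow> bit l i = bit l k)")
      case True
      then have "bit u i = bit u k"
        using assms by auto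
      moreover have "qft_exponent n b (Suc u) k = qft_exponent n b u k + bit u k * 2 ^ (n - 1 - u + b)"
        unfolding qft_exponent_def using assms by simp
      ultimately have "zeta n ^ (bit b i * qft_exponent n b (Suc u) k) =
          zeta n ^ (bit b i * qft_exponent n b u k) * ?\<phi> ^ (bit b i * bit u i)"
        by (simp add: add_mult_distrib2 power_add power_mult[symmetric] ac_simps)
      then show ?thesis
        using True \<open>i < 2 ^ Suc n\<close> by (simp add: qft_stage_partial_def ac_simps)
    qed (auto simp: qft_stage_partial_def)
    finally show ?thesis .
  qed
qed

lemma qft_stage_partial_complete: "qft_stage_partial n b n = qft_stage n (Suc b)"
  by (intro ext) (auto simp: qft_stage_partial_def qft_stage_def Suc_le_eq ac_simps)

lemma fold_qft_cphases:
  "b < u \<Longrightarrow> u \<le> n \<Longrightarrow>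
   fold (mat_mult (2 ^ Suc n)) (map (qft_cphase_gate n b) [u..<n]) (qft_stage_partial n b u) =
   qft_stage_partial n b n"
proof (induction "n - u" arbitrary: u)
  case (Suc x)
  then have "u < n"
    by simp
  then show ?case
    using Suc qft_cphase_step[OF Suc.prems(1) \<open>u < n\<close>] by (simp add: upt_conv_Cons)
qed simp

lemma fold_qft_blocks:
  "1 \<le> n \<Longrightarrow> b \<le> n \<Longrightarrow>
   fold (mat_mult (2 ^ Suc n)) (concat (map (qft_block n) [0..<b])) (mat_id (2 ^ Suc n)) = qft_stage n b"
proof (induction b)
  case (Suc b)
  then show ?case
    using qft_hadamard_step[of n b] fold_qft_cphases[of b "Suc b" n] qft_stage_partial_complete[of n b]
    by (simp add: qft_block_def)
qed (simp add: qft_stage_0)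

lemma circuit_matrix_qft_gates: "1 \<le> n \<Longrightarrow> circuit_matrix (Suc n) (rev (qft_gates n)) = qft_stage n n"
  unfolding circuit_matrix_def foldr_conv_fold qft_gates_def using fold_qft_blocks[of n n] by simp

lemma zeta_power_bitrev:
  assumes "l < n"
  shows "zeta n ^ (2 ^ l * bitrev n k) = zeta n ^ qft_exponent n l n k"
proof -
  have vanish: "\<forall>m\<in>{..<n} - {l..<n}. zeta n ^ (bit m k * 2 ^ (l + (n - 1 - m))) = 1"
  proof
    fix m
    assume "m \<in> {..<n} - {l..<n}"
    then have "m < l"
      by auto
    have "l + (n - 1 - m) = (l - 1 - m) + n"
      using \<open>m < l\<close> assms by simp
    then have "bit m k * 2 ^ (l + (n - 1 - m)) = (bit m k * 2 ^ (l - 1 - m)) * 2 ^ n"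
      by (simp add: power_add)
    then show "zeta n ^ (bit m k * 2 ^ (l + (n - 1 - m))) = 1"
      by (metis zeta_power_mult_2n)
  qed
  have "2 ^ l * bitrev n k = (\<Sum>m<n. bit m k * 2 ^ (l + (n - 1 - m)))"
    unfolding bitrev_def sum_distrib_left power_add by (simp add: ac_simps)
  then have "zeta n ^ (2 ^ l * bitrev n k) = (\<Prod>m<n. zeta n ^ (bit m k * 2 ^ (l + (n - 1 - m))))"
    by (simp add: power_sum)
  also have "\<dots> = (\<Prod>m\<in>{l..<n}. zeta n ^ (bit m k * 2 ^ (l + (n - 1 - m))))"
    by (rule prod.mono_neutral_right[OF _ _ vanish]) auto
  also have "\<dots> = zeta n ^ qft_exponent n l n k"
    unfolding qft_exponent_def power_sum by (intro prod.cong) (auto simp: ac_simps)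
  finally show ?thesis .
qed

lemma qft_stage_final:
  assumes "1 \<le> n" "i < 2 ^ n" "k < 2 ^ n"
  shows "qft_stage n n i k = zeta n ^ (i * bitrev n k) * inv_sqrt2 ^ n"
proof -
  have "(\<Prod>l<n. zeta n ^ (bit l i * qft_exponent n l n k)) = (\<Prod>l<n. zeta n ^ (bit l i * 2 ^ l * bitrev n k))"
  proof (intro prod.cong refl)
    fix l
    assume "l \<in> {..<n}"
    have "zeta n ^ (bit l i * qft_exponent n l n k) = (zeta n ^ qft_exponent n l n k) ^ bit l i"
      by (metis mult.commute power_mult)
    also have "\<dots> = (zeta n ^ (2 ^ l * bitrev n k)) ^ bit l i"
      using zeta_power_bitrev \<open>l \<in> {..<n}\<close> by simp
    also have "\<dots> = zeta n ^ (bit l i * 2 ^ l * bitrev n k)"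
      by (metis mult.commute mult.assoc power_mult)
    finally show "zeta n ^ (bit l i * qft_exponent n l n k) = zeta n ^ (bit l i * 2 ^ l * bitrev n k)" .
  qed
  also have "\<dots> = zeta n ^ (\<Sum>l<n. bit l i * 2 ^ l * bitrev n k)"
    by (simp add: power_sum)
  also have "(\<Sum>l<n. bit l i * 2 ^ l * bitrev n k) = i * bitrev n k"
    using eq_sum_bits[OF assms(2)] by (simp add: sum_distrib_right[symmetric])
  finally show ?thesis
    using assms bit_eq_0_if_less_power[OF assms(2)] bit_eq_0_if_less_power[OF assms(3)]
    by (simp add: qft_stage_def)
qed

lemma qft_stage_final_eq_0: "a < 2 ^ n \<Longrightarrow> 2 ^ n \<le> k \<Longrightarrow> qft_stage n n a k = 0"
  using bit_eq_0_if_less_power[of a n n] bit_top_eq_1[of n k] by (auto simp: qft_stage_def)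

lemma elementary_qft_gates:
  "g \<in> set (qft_gates n) \<Longrightarrow> elementary_gate (Suc n) g \<and> elementary_gate (Suc n) (adjoint g)"
  by (auto simp: qft_gates_def qft_block_def qft_hadamard_gate_def qft_cphase_gate_def
      adjoint_one_qubit_gate adjoint_two_qubit_gate adjoint_hadamard adjoint_cphase unitary_hadamard
      norm_power intro!: elementary_one_qubit_gate elementary_two_qubit_gate unitary_cphase)

lemma bounded_qft_gates:
  "g \<in> set (qft_gates n) \<Longrightarrow> row_bounded (2 ^ Suc n) g \<and> col_bounded (2 ^ Suc n) g"
  unfolding qft_gates_def qft_block_def qft_hadamard_gate_def qft_cphase_gate_def
  by (auto simp: row_bounded_one_qubit_gate col_bounded_one_qubit_gate
      row_bounded_two_qubit_gate col_bounded_two_qubit_gate simp del: power_Suc)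

lemma length_qft_gates: "length (qft_gates n) \<le> n * n"
proof -
  have "length (qft_gates n) = (\<Sum>b\<leftarrow>[0..<n]. Suc (n - Suc b))"
    by (simp add: qft_gates_def length_concat qft_block_def comp_def)
  also have "\<dots> = (\<Sum>b<n. Suc (n - Suc b))"
    by (subst sum.distinct_set_conv_list[symmetric]) (simp_all add: atLeast0LessThan)
  also have "\<dots> \<le> (\<Sum>b<n. n)"
    by (rule sum_mono) auto
  finally show ?thesis
    by simp
qed

section \<open>The signal-processing circuit\<close>

definition phase_diag :: "complex \<Rightarrow> cmat" where
  "phase_diag z = (\<lambda>k k'. if k = k' then (if k = 1 then z else 1) else 0)"

fun qsp_matrix :: "cmat list \<Rightarrow> complex \<Rightarrow> cmat" where
  "qsp_matrix [] z = mat_id 2"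
| "qsp_matrix [R] z = R"
| "qsp_matrix (R # S # Rs) z = mat_mult 2 R (mat_mult 2 (phase_diag z) (qsp_matrix (S # Rs) z))"

lemma qsp_matrix_Cons:
  "qsp_matrix (R # S # Rs) z 0 0 = R 0 0 * qsp_matrix (S # Rs) z 0 0 + R 0 1 * z * qsp_matrix (S # Rs) z 1 0"
  "qsp_matrix (R # S # Rs) z 1 0 = R 1 0 * qsp_matrix (S # Rs) z 0 0 + R 1 1 * z * qsp_matrix (S # Rs) z 1 0"
  by (simp_all add: mat_mult_def phase_diag_def numeral_2_eq_2)

text \<open>Between two of them, the controlled phases
  \<open>omega n ^ 2 ^ (n - 1 - b)\<close> on the ancilla and qubit \<open>b\<close> multiply to \<open>diag(1, omega n ^ bitrev n k)\<close>
  on the ancilla when the register holds \<open>k\<close>.\<close>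

definition ancilla_gate :: "nat \<Rightarrow> cmat \<Rightarrow> cmat" where
  "ancilla_gate n R = one_qubit_gate (Suc n) n R"

definition ancilla_cphase_gate :: "nat \<Rightarrow> nat \<Rightarrow> cmat" where
  "ancilla_cphase_gate n b = two_qubit_gate (Suc n) n b (cphase (omega n ^ 2 ^ (n - 1 - b)))"

fun qsp_gates :: "nat \<Rightarrow> cmat list \<Rightarrow> cmat list" where
  "qsp_gates n [] = []"
| "qsp_gates n [R] = [ancilla_gate n R]"
| "qsp_gates n (R # S # Rs) = ancilla_gate n R # map (ancilla_cphase_gate n) [0..<n] @ qsp_gates n (S # Rs)"

definition qsp_block_diag :: "nat \<Rightarrow> cmat list \<Rightarrow> cmat" where
  "qsp_block_diag n Rs = (\<lambda>i j.
     if i < 2 ^ Suc n \<and> j < 2 ^ Suc n \<and> i mod 2 ^ n = j mod 2 ^ n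
     then qsp_matrix Rs (omega n ^ bitrev n i) (bit n i) (bit n j) else 0)"

lemma length_qsp_gates: "length (qsp_gates n Rs) = length Rs + (length Rs - 1) * n"
  by (induction n Rs rule: qsp_gates.induct) auto

lemma elementary_qsp_gates:
  "\<forall>R\<in>set Rs. unitary_mat 2 R \<Longrightarrow> g \<in> set (qsp_gates n Rs) \<Longrightarrow> elementary_gate (Suc n) g"
  by (induction n Rs rule: qsp_gates.induct)
    (auto simp: ancilla_gate_def ancilla_cphase_gate_def norm_power
      intro!: elementary_one_qubit_gate elementary_two_qubit_gate unitary_cphase)

lemma row_bounded_qsp_gates: "g \<in> set (qsp_gates n Rs) \<Longrightarrow> row_bounded (2 ^ Suc n) g"
  by (induction n Rs rule: qsp_gates.induct)
    (auto simp: ancilla_gate_def ancilla_cphase_gate_def row_bounded_one_qubit_gate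
      row_bounded_two_qubit_gate simp del: power_Suc)

lemma ancilla_cphases_mult:
  assumes "row_bounded (2 ^ Suc n) M" "i < 2 ^ Suc n"
  shows "foldr (mat_mult (2 ^ Suc n)) (map (ancilla_cphase_gate n) [0..<n]) M i j =
    (omega n ^ bitrev n i) ^ bit n i * M i j"
proof -
  have "foldr (mat_mult (2 ^ Suc n)) (map (ancilla_cphase_gate n) bs) M i j =
      (\<Prod>b\<leftarrow>bs. (omega n ^ 2 ^ (n - 1 - b)) ^ (bit n i * bit b i)) * M i j"
    if "\<forall>b\<in>set bs. b < n" for bs
    using that
  proof (induction bs)
    case (Cons b bs)
    have "mat_mult (2 ^ Suc n) (ancilla_cphase_gate n b)
        (foldr (mat_mult (2 ^ Suc n)) (map (ancilla_cphase_gate n) bs) M) i j =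
      (omega n ^ 2 ^ (n - 1 - b)) ^ (bit n i * bit b i) *
        foldr (mat_mult (2 ^ Suc n)) (map (ancilla_cphase_gate n) bs) M i j"
      unfolding ancilla_cphase_gate_def cphase_diag_entry[symmetric]
      by (rule two_qubit_gate_diag_mult) (use Cons.prems assms in \<open>auto simp: cphase_def\<close>)
    then show ?case
      using Cons by simp
  qed simp
  moreover have "(\<Prod>b\<leftarrow>[0..<n]. (omega n ^ 2 ^ (n - 1 - b)) ^ (bit n i * bit b i)) =
      (omega n ^ bitrev n i) ^ bit n i"
  proof -
    have "(\<Prod>b\<leftarrow>[0..<n]. (omega n ^ 2 ^ (n - 1 - b)) ^ (bit n i * bit b i)) =
        (\<Prod>b<n. (omega n ^ (bit b i * 2 ^ (n - 1 - b))) ^ bit n i)"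
      by (subst prod.distinct_set_conv_list[symmetric])
        (auto simp: atLeast0LessThan ac_simps simp flip: power_mult intro!: prod.cong)
    then show ?thesis
      unfolding bitrev_def power_sum prod_power_distrib by simp
  qed
  ultimately show ?thesis
    by simp
qed

lemma upd_bit_top:
  assumes "i < 2 ^ Suc n" "x < 2"
  shows "upd_bit n x i mod 2 ^ n = i mod 2 ^ n" "bit n (upd_bit n x i) = x" "upd_bit n x i < 2 ^ Suc n"
proof -
  have "i div 2 ^ Suc n = 0"
    using assms by simp
  then show "upd_bit n x i mod 2 ^ n = i mod 2 ^ n"
    unfolding upd_bit_def by simp
  show "bit n (upd_bit n x i) = x"
    using assms by (simp add: bit_upd_bit)
  show "upd_bit n x i < 2 ^ Suc n"
    using upd_bit_less[OF assms(1) _ assms(2)] by simp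
qed

lemma bits_below_agree_iff_mod_eq:
  "(\<forall>b<Suc n. b \<noteq> n \<longrightarrow> bit b i = bit b j) \<longleftrightarrow> i mod 2 ^ n = j mod 2 ^ n"
proof
  assume "\<forall>b<Suc n. b \<noteq> n \<longrightarrow> bit b i = bit b j"
  then show "i mod 2 ^ n = j mod 2 ^ n"
    by (intro bits_eq_imp_eq[of _ n]) (auto simp: bit_mod_power)
next
  assume "i mod 2 ^ n = j mod 2 ^ n"
  then show "\<forall>b<Suc n. b \<noteq> n \<longrightarrow> bit b i = bit b j"
    by (metis bit_mod_power less_SucE)
qed

lemma qsp_block_diag_Cons:
  "mat_mult (2 ^ Suc n) (ancilla_gate n R)
     (foldr (mat_mult (2 ^ Suc n)) (map (ancilla_cphase_gate n) [0..<n]) (qsp_block_diag n (S # Rs))) =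
   qsp_block_diag n (R # S # Rs)"
proof (intro ext)
  fix i j
  let ?V = "qsp_block_diag n (S # Rs)"
  show "mat_mult (2 ^ Suc n) (ancilla_gate n R)
      (foldr (mat_mult (2 ^ Suc n)) (map (ancilla_cphase_gate n) [0..<n]) ?V) i j =
    qsp_block_diag n (R # S # Rs) i j"
  proof (cases "i < 2 ^ Suc n")
    case False
    then show ?thesis
      unfolding ancilla_gate_def
      by (simp add: row_bounded_mat_mult_eq_0 row_bounded_one_qubit_gate qsp_block_diag_def del: power_Suc)
  next
    case True
    define z where "z = omega n ^ bitrev n i"
    have V: "row_bounded (2 ^ Suc n) ?V"
      by (simp add: row_bounded_def qsp_block_diag_def)
    have bitrev_upd: "bitrev n (upd_bit n x i) = bitrev n i" if "x < 2" for x
      using bitrev_mod_power[of n "upd_bit n x i"] bitrev_mod_power[of n i] upd_bit_top[OF True that]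
      by simp
    have "mat_mult (2 ^ Suc n) (ancilla_gate n R)
        (foldr (mat_mult (2 ^ Suc n)) (map (ancilla_cphase_gate n) [0..<n]) ?V) i j =
      (\<Sum>x<2. R (bit n i) x * (z ^ x * ?V (upd_bit n x i) j))"
      unfolding ancilla_gate_def one_qubit_gate_mult[OF lessI True]
      using upd_bit_top[OF True] bitrev_upd
      by (intro sum.cong) (simp_all add: ancilla_cphases_mult[OF V] z_def del: power_Suc)
    also have "\<dots> = qsp_block_diag n (R # S # Rs) i j"
    proof (cases "j < 2 ^ Suc n \<and> i mod 2 ^ n = j mod 2 ^ n")
      case True
      then have "(\<Sum>x<2. R (bit n i) x * (z ^ x * ?V (upd_bit n x i) j)) =
          (\<Sum>x<2. R (bit n i) x * (z ^ x * qsp_matrix (S # Rs) z x (bit n j)))"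
        using \<open>i < 2 ^ Suc n\<close> upd_bit_top[OF \<open>i < 2 ^ Suc n\<close>] bitrev_upd
        by (intro sum.cong) (auto simp: qsp_block_diag_def z_def)
      also have "\<dots> = qsp_matrix (R # S # Rs) z (bit n i) (bit n j)"
        by (simp add: mat_mult_def phase_diag_def numeral_2_eq_2)
      finally show ?thesis
        using True \<open>i < 2 ^ Suc n\<close> by (simp add: qsp_block_diag_def z_def)
    next
      case False
      then show ?thesis
        using upd_bit_top[OF True] by (auto simp: qsp_block_diag_def)
    qed
    finally show ?thesis .
  qed
qed

lemma circuit_matrix_qsp_gates: "Rs \<noteq> [] \<Longrightarrow> circuit_matrix (Suc n) (qsp_gates n Rs) = qsp_block_diag n Rs"
proof (induction n Rs rule: qsp_gates.induct)
  case (2 n R)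
  have "circuit_matrix (Suc n) [ancilla_gate n R] = ancilla_gate n R"
    unfolding ancilla_gate_def by (rule circuit_matrix_single[OF col_bounded_one_qubit_gate])
  then show ?case
    by (intro ext) (simp add: ancilla_gate_def one_qubit_gate_def qsp_block_diag_def bits_below_agree_iff_mod_eq)
next
  case (3 n R S Rs)
  then show ?case
    using qsp_block_diag_Cons by (simp add: circuit_matrix_def)
qed simp

section \<open>Quantum signal processing\<close>

lemma of_real_cmod_square: "complex_of_real ((cmod w)\<^sup>2) = cnj w * w"
  using complex_norm_square[of w] by (simp add: mult.commute)

lemma cnj_on_circle: "cmod z = 1 \<Longrightarrow> cnj z = inverse z"
  using complex_norm_square[of z] by (simp add: inverse_unique)

lemma poly_eq_0_if_vanishes_on_circle:
  assumes "\<forall>z. cmod z = 1 \<longrightarrow> poly p z = 0"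
  shows "p = 0"
proof (rule ccontr)
  assume "p \<noteq> 0"
  then have "finite {z. poly p z = 0}"
    by (rule poly_roots_finite)
  moreover have "{z::complex. cmod z = 1} \<subseteq> {z. poly p z = 0}"
    using assms by auto
  ultimately show False
    using infinite_unit_circle finite_subset by blast
qed

lemma poly_as_sum:
  fixes p :: "complex poly"
  assumes "degree p \<le> m"
  shows "poly p z = (\<Sum>k\<le>m. coeff p k * z ^ k)"
  unfolding poly_altdef using assms by (intro sum.mono_neutral_left) (auto simp: coeff_eq_0)

text \<open>\<open>conj_reflect p m\<close> is \<open>z ^ m * cnj (p (1 / cnj z))\<close>, which equals \<open>z ^ m * cnj (p z)\<close> on the
  unit circle.\<close>

definition conj_reflect :: "complex poly \<Rightarrow> nat \<Rightarrow> complex poly" where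
  "conj_reflect p m = (\<Sum>k\<le>m. monom (cnj (coeff p k)) (m - k))"

lemma coeff_conj_reflect: "coeff (conj_reflect p m) t = (if t \<le> m then cnj (coeff p (m - t)) else 0)"
proof -
  have "coeff (conj_reflect p m) t = (\<Sum>k\<le>m. if k = m - t \<and> t \<le> m then cnj (coeff p k) else 0)"
    unfolding conj_reflect_def coeff_sum coeff_monom by (intro sum.cong) auto
  then show ?thesis
    by (cases "t \<le> m") auto
qed

lemma degree_conj_reflect: "degree (conj_reflect p m) \<le> m"
  by (rule degree_le) (simp add: coeff_conj_reflect)

lemma poly_conj_reflect:
  assumes "w \<noteq> 0" "degree p \<le> m"
  shows "poly (conj_reflect p m) w = w ^ m * cnj (poly p (inverse (cnj w)))"
proof -
  have "poly (conj_reflect p m) w = (\<Sum>k\<le>m. cnj (coeff p k) * w ^ (m - k))"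
    unfolding conj_reflect_def by (simp add: poly_sum poly_monom)
  also have "\<dots> = (\<Sum>k\<le>m. w ^ m * (cnj (coeff p k) * inverse w ^ k))"
    using assms(1) by (intro sum.cong) (simp_all add: power_diff field_simps)
  also have "\<dots> = w ^ m * cnj (poly p (inverse (cnj w)))"
    unfolding poly_as_sum[OF assms(2)] by (simp add: sum_distrib_left)
  finally show ?thesis .
qed

lemma poly_conj_reflect_on_circle:
  "cmod z = 1 \<Longrightarrow> degree p \<le> m \<Longrightarrow> poly (conj_reflect p m) z = z ^ m * cnj (poly p z)"
  using poly_conj_reflect[of z p m] cnj_on_circle[of z] by (metis norm_zero zero_neq_one inverse_inverse_eq)

lemma coeff_mult_top:
  assumes "degree p \<le> m" "degree r \<le> m"
  shows "coeff (p * r) (m + m) = coeff p m * coeff r m"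
proof (cases "degree p = m \<and> degree r = m")
  case True
  then show ?thesis
    using coeff_mult_degree_sum[of p r] by simp
next
  case False
  then have "coeff p m = 0 \<or> coeff r m = 0"
    using assms by (auto intro: coeff_eq_0)
  moreover have "degree (p * r) < m + m"
    using False assms degree_mult_le[of p r] by linarith
  ultimately show ?thesis
    by (auto simp: coeff_eq_0)
qed

lemma degree_le_if_top_coeff_0: "degree (p::complex poly) \<le> Suc d \<Longrightarrow> coeff p (Suc d) = 0 \<Longrightarrow> degree p \<le> d"
  by (rule degree_le) (metis Suc_lessI coeff_eq_0 le_less_trans)

text \<open>Comparing the coefficients of \<open>z ^ (2 * m)\<close> in \<open>P P\<^sup>* + Q Q\<^sup>* = z ^ m\<close>, where
  \<open>P\<^sup>* = conj_reflect P m\<close>.\<close>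

lemma unit_pair_orthogonality:
  assumes "degree P \<le> m" "degree Q \<le> m" "1 \<le> m"
    "\<forall>z. cmod z = 1 \<longrightarrow> (cmod (poly P z))\<^sup>2 + (cmod (poly Q z))\<^sup>2 = 1"
  shows "coeff P m * cnj (coeff P 0) + coeff Q m * cnj (coeff Q 0) = 0"
proof -
  define H where "H = P * conj_reflect P m + Q * conj_reflect Q m - monom 1 m"
  have "poly H z = 0" if z: "cmod z = 1" for z
  proof -
    have "poly H z = z ^ m * (cnj (poly P z) * poly P z + cnj (poly Q z) * poly Q z - 1)"
      unfolding H_def using z assms by (simp add: poly_conj_reflect_on_circle poly_monom algebra_simps)
    then show ?thesis
      using assms(4) z unfolding of_real_cmod_square[symmetric] of_real_add[symmetric] by simp
  qed
  then have "H = 0"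
    by (simp add: poly_eq_0_if_vanishes_on_circle)
  then have "coeff H (m + m) = 0"
    by simp
  moreover have "coeff H (m + m) = coeff P m * cnj (coeff P 0) + coeff Q m * cnj (coeff Q 0)"
    unfolding H_def using assms degree_conj_reflect[of P m] degree_conj_reflect[of Q m]
    by (simp add: coeff_mult_top coeff_conj_reflect coeff_monom)
  ultimately show ?thesis
    by simp
qed

definition su2 :: "complex \<Rightarrow> complex \<Rightarrow> cmat" where
  "su2 x y = (\<lambda>i j. if i = 0 then (if j = 0 then x else - cnj y) else (if j = 0 then y else cnj x))"

lemma unitary_su2: "cnj x * x + cnj y * y = 1 \<Longrightarrow> unitary_mat 2 (su2 x y)"
  unfolding unitary_mat_def su2_def by (auto simp: numeral_2_eq_2 less_Suc_eq algebra_simps)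

lemma normalize_pair:
  fixes u v :: complex
  assumes "(u, v) \<noteq> (0, 0)"
  obtains s :: real where "s > 0"
    "cnj (u / of_real s) * (u / of_real s) + cnj (v / of_real s) * (v / of_real s) = 1"
proof
  define s where "s = sqrt ((cmod u)\<^sup>2 + (cmod v)\<^sup>2)"
  have pos: "(cmod u)\<^sup>2 + (cmod v)\<^sup>2 > 0"
    using assms by (auto simp: add_pos_nonneg add_nonneg_pos)
  then show "s > 0"
    unfolding s_def by simp
  have "cnj u * u + cnj v * v = complex_of_real (s\<^sup>2)"
    unfolding s_def using pos by (simp add: of_real_cmod_square[symmetric])
  then show "cnj (u / of_real s) * (u / of_real s) + cnj (v / of_real s) * (v / of_real s) = 1"
    using \<open>s > 0\<close> by (simp add: add_divide_distrib[symmetric] power2_eq_square)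
qed

lemma exists_unit_pair_annihilating:
  assumes "a * cnj \<alpha> + b * cnj \<beta> = 0"
  obtains x y where "cnj x * x + cnj y * y = 1" "cnj x * a + cnj y * b = 0" "x * \<beta> - y * \<alpha> = 0"
proof -
  obtain u v where uv: "(u, v) \<noteq> (0, 0)" "cnj u * a + cnj v * b = 0" "u * \<beta> - v * \<alpha> = 0"
  proof (cases "(a, b) = (0, 0)")
    case False
    have "cnj a * \<alpha> + cnj b * \<beta> = 0"
      using arg_cong[OF assms, of cnj] by simp
    then show ?thesis
      using False that[of "cnj b" "- cnj a"] by (auto simp: algebra_simps)
  next
    case True
    then show ?thesis
      using that[of 1 0] that[of \<alpha> \<beta>] by (cases "(\<alpha>, \<beta>) = (0, 0)") (auto simp: algebra_simps)
  qed
  obtain s :: real where s: "s > 0"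
    "cnj (u / of_real s) * (u / of_real s) + cnj (v / of_real s) * (v / of_real s) = 1"
    using normalize_pair[OF uv(1)] by blast
  have "cnj (u / of_real s) * a + cnj (v / of_real s) * b = (cnj u * a + cnj v * b) / of_real s"
    "(u / of_real s) * \<beta> - (v / of_real s) * \<alpha> = (u * \<beta> - v * \<alpha>) / of_real s"
    by (simp_all add: add_divide_distrib diff_divide_distrib)
  then show ?thesis
    using s uv that[of "u / of_real s" "v / of_real s"] by simp
qed

lemma unitary_pair_cmod_square:
  assumes "cnj x * x + cnj y * y = 1"
  shows "(cmod (cnj x * p + cnj y * r))\<^sup>2 + (cmod (x * r - y * p))\<^sup>2 = (cmod p)\<^sup>2 + (cmod r)\<^sup>2"
proof -
  have "complex_of_real ((cmod (cnj x * p + cnj y * r))\<^sup>2 + (cmod (x * r - y * p))\<^sup>2) =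
      cnj (cnj x * p + cnj y * r) * (cnj x * p + cnj y * r) + cnj (x * r - y * p) * (x * r - y * p)"
    unfolding of_real_add of_real_cmod_square ..
  also have "\<dots> = (cnj x * x + cnj y * y) * (cnj p * p + cnj r * r)"
    by (simp add: algebra_simps)
  also have "\<dots> = complex_of_real ((cmod p)\<^sup>2 + (cmod r)\<^sup>2)"
    unfolding assms of_real_add of_real_cmod_square by simp
  finally show ?thesis
    by (simp only: of_real_eq_iff)
qed

text \<open>One layer of the decomposition: the rotation \<open>su2 x y\<close> is chosen so that its inverse
  lowers the degree of \<open>P\<close> and makes \<open>Q\<close> divisible by \<open>z\<close>.\<close>

lemma unit_pair_peel:
  assumes deg: "degree P \<le> Suc d" "degree Q \<le> Suc d"
    and unit: "\<forall>z. cmod z = 1 \<longrightarrow> (cmod (poly P z))\<^sup>2 + (cmod (poly Q z))\<^sup>2 = 1"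
  obtains x y P' Q' where "cnj x * x + cnj y * y = 1" "degree P' \<le> d" "degree Q' \<le> d"
    "\<forall>z. cmod z = 1 \<longrightarrow> (cmod (poly P' z))\<^sup>2 + (cmod (poly Q' z))\<^sup>2 = 1"
    "\<And>z. poly P z = x * poly P' z - cnj y * (z * poly Q' z)"
    "\<And>z. poly Q z = y * poly P' z + cnj x * (z * poly Q' z)"
proof -
  have "coeff P (Suc d) * cnj (coeff P 0) + coeff Q (Suc d) * cnj (coeff Q 0) = 0"
    using assms by (intro unit_pair_orthogonality) auto
  then obtain x y where xy: "cnj x * x + cnj y * y = 1"
    "cnj x * coeff P (Suc d) + cnj y * coeff Q (Suc d) = 0" "x * coeff Q 0 - y * coeff P 0 = 0"
    by (rule exists_unit_pair_annihilating)
  define P' where "P' = smult (cnj x) P + smult (cnj y) Q"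
  define Q\<^sub>z where "Q\<^sub>z = smult x Q - smult y P"
  have smult_le: "degree (smult a p) \<le> Suc d" if "degree p \<le> Suc d" for a :: complex and p
    by (rule order_trans[OF degree_smult_le that])
  have deg': "degree P' \<le> Suc d" "degree Q\<^sub>z \<le> Suc d"
    unfolding P'_def Q\<^sub>z_def using deg by (simp_all add: degree_add_le degree_diff_le smult_le)
  have P': "degree P' \<le> d"
    using deg'(1) by (rule degree_le_if_top_coeff_0) (simp add: P'_def xy(2))
  obtain c Q' where Q'_def: "Q\<^sub>z = pCons c Q'"
    by (cases Q\<^sub>z) auto
  have "c = coeff Q\<^sub>z 0"
    using Q'_def by simp
  also have "\<dots> = 0"
    unfolding Q\<^sub>z_def using xy(3) by simp
  finally have Q\<^sub>z: "Q\<^sub>z = pCons 0 Q'"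
    using Q'_def by simp
  then have poly_Q\<^sub>z: "poly Q\<^sub>z z = z * poly Q' z" for z
    by simp
  have Q': "degree Q' \<le> d"
    using deg'(2) unfolding Q\<^sub>z by (cases "Q' = 0") auto
  have unit': "(cmod (poly P' z))\<^sup>2 + (cmod (poly Q' z))\<^sup>2 = 1" if z: "cmod z = 1" for z
  proof -
    have "cmod (poly Q' z) = cmod (x * poly Q z - y * poly P z)"
      using poly_Q\<^sub>z[of z] z by (simp add: Q\<^sub>z_def norm_mult)
    then show ?thesis
      using unitary_pair_cmod_square[OF xy(1), of "poly P z" "poly Q z"] unit z by (simp add: P'_def)
  qed
  have decomp: "poly P z = x * poly P' z - cnj y * (z * poly Q' z)"
    "poly Q z = y * poly P' z + cnj x * (z * poly Q' z)" for z
  proof -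
    have "x * poly P' z - cnj y * poly Q\<^sub>z z = (cnj x * x + cnj y * y) * poly P z"
      "y * poly P' z + cnj x * poly Q\<^sub>z z = (cnj x * x + cnj y * y) * poly Q z"
      unfolding P'_def Q\<^sub>z_def by (simp_all add: algebra_simps)
    then show "poly P z = x * poly P' z - cnj y * (z * poly Q' z)"
      "poly Q z = y * poly P' z + cnj x * (z * poly Q' z)"
      unfolding xy(1) poly_Q\<^sub>z by simp_all
  qed
  show ?thesis
    by (rule that[OF xy(1) P' Q' _ decomp]) (simp add: unit')
qed

lemma unit_pair_qsp:
  "degree P \<le> d \<Longrightarrow> degree Q \<le> d \<Longrightarrow>
   \<forall>z. cmod z = 1 \<longrightarrow> (cmod (poly P z))\<^sup>2 + (cmod (poly Q z))\<^sup>2 = 1 \<Longrightarrow>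
   \<exists>Rs. length Rs = Suc d \<and> (\<forall>R\<in>set Rs. unitary_mat 2 R) \<and>
     (\<forall>z. cmod z = 1 \<longrightarrow> qsp_matrix Rs z 0 0 = poly P z \<and> qsp_matrix Rs z 1 0 = poly Q z)"
proof (induction d arbitrary: P Q)
  case 0
  define \<alpha> where "\<alpha> = coeff P 0"
  define \<beta> where "\<beta> = coeff Q 0"
  have P: "P = [:\<alpha>:]" and Q: "Q = [:\<beta>:]"
    unfolding \<alpha>_def \<beta>_def using "0.prems" degree_0_id[of P] degree_0_id[of Q] by simp_all
  have "complex_of_real ((cmod \<alpha>)\<^sup>2 + (cmod \<beta>)\<^sup>2) = 1"
    using "0.prems"(3)[rule_format, of 1] P Q by simp
  then have "unitary_mat 2 (su2 \<alpha> \<beta>)"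
    unfolding of_real_add of_real_cmod_square by (rule unitary_su2)
  then show ?case
    by (intro exI[of _ "[su2 \<alpha> \<beta>]"]) (simp add: P Q su2_def)
next
  case (Suc d)
  obtain x y P' Q' where xy: "cnj x * x + cnj y * y = 1" "degree P' \<le> d" "degree Q' \<le> d"
    "\<forall>z. cmod z = 1 \<longrightarrow> (cmod (poly P' z))\<^sup>2 + (cmod (poly Q' z))\<^sup>2 = 1"
    "\<And>z. poly P z = x * poly P' z - cnj y * (z * poly Q' z)"
    "\<And>z. poly Q z = y * poly P' z + cnj x * (z * poly Q' z)"
    using unit_pair_peel[OF Suc.prems] by blast
  obtain Rs where Rs: "length Rs = Suc d" "\<forall>R\<in>set Rs. unitary_mat 2 R"
    "\<forall>z. cmod z = 1 \<longrightarrow> qsp_matrix Rs z 0 0 = poly P' z \<and> qsp_matrix Rs z 1 0 = poly Q' z"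
    using Suc.IH[OF xy(2-4)] by blast
  then obtain S Rs' where Rs_Cons: "Rs = S # Rs'"
    by (cases Rs) auto
  have "qsp_matrix (su2 x y # Rs) z 0 0 = poly P z \<and> qsp_matrix (su2 x y # Rs) z 1 0 = poly Q z"
    if "cmod z = 1" for z
    using Rs(3) that unfolding Rs_Cons qsp_matrix_Cons xy(5,6) by (simp add: su2_def)
  then show ?case
    using Rs unitary_su2[OF xy(1)] by (intro exI[of _ "su2 x y # Rs"]) simp
qed

section \<open>The Fejer--Riesz theorem\<close>

definition nonneg_real :: "complex \<Rightarrow> bool" where
  "nonneg_real w \<longleftrightarrow> Im w = 0 \<and> 0 \<le> Re w"

lemma closed_nonneg_real: "closed {w. nonneg_real w}"
proof -
  have "{w. nonneg_real w} = {w. Im w = 0} \<inter> {w. 0 \<le> Re w}"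
    by (auto simp: nonneg_real_def)
  moreover have "closed {w::complex. Im w = 0}" "closed {w::complex. 0 \<le> Re w}"
    by (intro closed_Collect_eq closed_Collect_le continuous_intros)+
  ultimately show ?thesis
    by auto
qed

lemma nonneg_real_divide: "nonneg_real w \<Longrightarrow> r > 0 \<Longrightarrow> nonneg_real (w / complex_of_real r)"
  by (simp add: nonneg_real_def Re_divide_of_real Im_divide_of_real)

lemma cis_difference_quotient_0: "((\<lambda>t. (cis t - 1) / complex_of_real t) \<longlongrightarrow> \<i>) (at (0::real))"
proof -
  have "((\<lambda>t. (cos t - 1) / t) \<longlongrightarrow> 0) (at (0::real))"
    using DERIV_cos[of 0] unfolding has_field_derivative_iff by simp
  moreover have "((\<lambda>t. sin t / t) \<longlongrightarrow> 1) (at (0::real))"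
    using DERIV_sin[of 0] unfolding has_field_derivative_iff by simp
  ultimately have "((\<lambda>t. Complex ((cos t - 1) / t) (sin t / t)) \<longlongrightarrow> Complex 0 1) (at (0::real))"
    by (rule tendsto_Complex)
  moreover have "(\<lambda>t. (cis t - 1) / complex_of_real t) = (\<lambda>t. Complex ((cos t - 1) / t) (sin t / t))"
    by (intro ext) (simp add: complex_eq_iff Re_divide_of_real Im_divide_of_real)
  ultimately show ?thesis
    by (simp add: Complex_eq)
qed

lemma poly_rotate_tendsto:
  assumes "a \<noteq> 0"
  shows "((\<lambda>t. poly p (a * cis t) / (a * cis t) ^ m) \<longlongrightarrow> poly p a / a ^ m) (at (0::real) within S)"
proof -
  have "((\<lambda>t. a * cis t) \<longlongrightarrow> a * cis 0) (at (0::real) within S)"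
    by (intro tendsto_intros)
  then have "((\<lambda>t. a * cis t) \<longlongrightarrow> a) (at (0::real) within S)"
    by simp
  then show ?thesis
    using assms by (intro tendsto_intros isCont_tendsto_compose[OF poly_isCont]) auto
qed

lemma cis_neq_1: "0 < t \<Longrightarrow> t < 1 \<Longrightarrow> cis t \<noteq> 1"
  using sin_gt_zero[of t] pi_ge_two by (auto simp: complex_eq_iff)

lemma nonneg_real_at_point:
  assumes a: "cmod a = 1" and h: "\<forall>z. cmod z = 1 \<longrightarrow> z \<noteq> a \<longrightarrow> nonneg_real (poly p z / z ^ m)"
  shows "nonneg_real (poly p a / a ^ m)"
proof -
  have "a \<noteq> 0"
    using a by auto
  have "\<forall>\<^sub>F t in at_right (0::real). poly p (a * cis t) / (a * cis t) ^ m \<in> {w. nonneg_real w}"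
    unfolding eventually_at_right_field
  proof (intro exI[of _ 1] conjI allI impI)
    fix t :: real
    assume "0 < t" "t < 1"
    then have "a * cis t \<noteq> a"
      using cis_neq_1 \<open>a \<noteq> 0\<close> by simp
    then show "poly p (a * cis t) / (a * cis t) ^ m \<in> {w. nonneg_real w}"
      using h a by (simp add: norm_mult)
  qed simp
  from Lim_in_closed_set[OF closed_nonneg_real this trivial_limit_at_right_real
    poly_rotate_tendsto[OF \<open>a \<noteq> 0\<close>]]
  show ?thesis
    by simp
qed

text \<open>A root \<open>a\<close> on the circle of a polynomial that is nonnegative there is a double root: the
  difference quotient of \<open>t \<mapsto> poly h (a * cis t) / (a * cis t) ^ m\<close> at \<open>t = 0\<close> is nonnegative
  from the right and nonpositive from the left, hence its limit \<open>a * \<i> * poly h\<^sub>1 a / a ^ m\<close>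
  vanishes.\<close>

lemma root_on_circle_double:
  assumes a: "cmod a = 1" and h: "h = [:-a, 1:] * h\<^sub>1"
    and nonneg: "\<forall>z. cmod z = 1 \<longrightarrow> nonneg_real (poly h z / z ^ m)"
  shows "poly h\<^sub>1 a = 0"
proof -
  have "a \<noteq> 0"
    using a by auto
  define \<psi> where "\<psi> t = a * ((cis t - 1) / complex_of_real t) * (poly h\<^sub>1 (a * cis t) / (a * cis t) ^ m)" for t
  define L where "L = a * \<i> * (poly h\<^sub>1 a / a ^ m)"
  have lim: "(\<psi> \<longlongrightarrow> L) (at 0)"
    unfolding \<psi>_def L_def by (intro tendsto_mult tendsto_const cis_difference_quotient_0 poly_rotate_tendsto[OF \<open>a \<noteq> 0\<close>])
  have \<psi>: "\<psi> t = (poly h (a * cis t) / (a * cis t) ^ m) / complex_of_real t" if "t \<noteq> 0" for t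
    unfolding \<psi>_def h using that by (simp add: algebra_simps)
  have nonneg_t: "nonneg_real (poly h (a * cis t) / (a * cis t) ^ m)" for t
    using nonneg a by (simp add: norm_mult)
  have "\<forall>\<^sub>F t in at_right (0::real). \<psi> t \<in> {w. nonneg_real w}"
    unfolding eventually_at_right_field
    using nonneg_real_divide[OF nonneg_t] \<psi> by (intro exI[of _ 1]) auto
  moreover have "\<forall>\<^sub>F t in at_left (0::real). - \<psi> t \<in> {w. nonneg_real w}"
    unfolding eventually_at_left_field
  proof (intro exI[of _ "-1"] conjI allI impI)
    fix t :: real
    assume "-1 < t" "t < 0"
    then have "- \<psi> t = (poly h (a * cis t) / (a * cis t) ^ m) / complex_of_real (- t)"
      using \<psi>[of t] by simp
    then show "- \<psi> t \<in> {w. nonneg_real w}"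
      using nonneg_real_divide[OF nonneg_t, of "- t"] \<open>t < 0\<close> by simp
  qed simp
  moreover have "(\<psi> \<longlongrightarrow> L) (at_right 0)" "(\<psi> \<longlongrightarrow> L) (at_left 0)"
    using lim filterlim_at_split by auto
  ultimately have "nonneg_real L" "nonneg_real (- L)"
    using Lim_in_closed_set[OF closed_nonneg_real] tendsto_minus trivial_limit_at_right_real
      trivial_limit_at_left_real by fastforce+
  then have "L = 0"
    by (auto simp: nonneg_real_def complex_eq_iff)
  then show ?thesis
    unfolding L_def using \<open>a \<noteq> 0\<close> by simp
qed

lemma self_reciprocal_if_real_on_circle:
  assumes "degree h \<le> 2 * m" "\<forall>z. cmod z = 1 \<longrightarrow> Im (poly h z / z ^ m) = 0"
  shows "h = conj_reflect h (2 * m)"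
proof -
  have "poly (h - conj_reflect h (2 * m)) z = 0" if z: "cmod z = 1" for z
  proof -
    have "z \<noteq> 0"
      using z by auto
    define w where "w = poly h z / z ^ m"
    have "Im w = 0"
      using assms(2) z unfolding w_def by simp
    then have "cnj w = w"
      by (simp add: complex_eq_iff)
    have h: "poly h z = w * z ^ m"
      unfolding w_def using \<open>z \<noteq> 0\<close> by simp
    have "poly (conj_reflect h (2 * m)) z = z ^ m * z ^ m * (w * inverse z ^ m)"
      unfolding poly_conj_reflect_on_circle[OF z assms(1)] h
      using \<open>cnj w = w\<close> cnj_on_circle[OF z] by (simp add: mult_2 power_add)
    then show ?thesis
      using h \<open>z \<noteq> 0\<close> by (simp add: field_simps)
  qed
  then have "h - conj_reflect h (2 * m) = 0"
    by (intro poly_eq_0_if_vanishes_on_circle) blast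
  then show ?thesis
    by simp
qed

text \<open>Both kinds of root pairs \<open>a, b\<close> of a polynomial nonnegative on the circle (a double root
  \<open>b = a\<close> on the circle, or \<open>b = 1 / cnj a\<close>) contribute a factor \<open>\<kappa> |z - a|\<^sup>2\<close> to \<open>h(z) / z ^ m\<close>.\<close>

lemma double_factor_on_circle:
  assumes "cmod z = 1" "cmod a = 1"
  shows "(z - a) * (z - a) / z = - a * complex_of_real ((cmod (z - a))\<^sup>2)"
proof -
  have "z \<noteq> 0" "a \<noteq> 0"
    using assms by auto
  then show ?thesis
    unfolding of_real_cmod_square complex_cnj_diff cnj_on_circle[OF assms(1)] cnj_on_circle[OF assms(2)]
    by (simp add: field_simps)
qed

lemma reflected_factor_on_circle:
  assumes "cmod z = 1" "a \<noteq> 0"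
  shows "(z - a) * (z - inverse (cnj a)) / z = - 1 / cnj a * complex_of_real ((cmod (z - a))\<^sup>2)"
proof -
  have "z \<noteq> 0" "cnj a \<noteq> 0"
    using assms by auto
  then show ?thesis
    unfolding of_real_cmod_square complex_cnj_diff cnj_on_circle[OF assms(1)]
    by (simp add: field_simps)
qed

lemma reflected_root:
  assumes "h = conj_reflect h M" "degree h \<le> M" "poly h a = 0" "a \<noteq> 0"
  shows "poly h (inverse (cnj a)) = 0"
proof -
  have "poly h (inverse (cnj a)) = poly (conj_reflect h M) (inverse (cnj a))"
    using assms(1) by simp
  also have "\<dots> = inverse (cnj a) ^ M * cnj (poly h a)"
    using assms(2,4) by (simp add: poly_conj_reflect)
  finally show ?thesis
    using assms(3) by simp
qed

lemma inverse_cnj_neq_self: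
  assumes "a \<noteq> 0" "cmod a \<noteq> 1"
  shows "inverse (cnj a) \<noteq> a"
proof
  assume "inverse (cnj a) = a"
  then have "cnj a * a = cnj a * inverse (cnj a)"
    by simp
  then have "complex_of_real ((cmod a)\<^sup>2) = 1"
    unfolding of_real_cmod_square using assms(1) by simp
  then have "(cmod a)\<^sup>2 = 1"
    by (simp only: of_real_eq_1_iff)
  then show False
    using assms norm_ge_zero[of a] by (simp add: power2_eq_1_iff)
qed

lemma nonneg_real_factor_pair:
  assumes deg: "degree h = 2 * Suc m" and sym: "h = conj_reflect h (2 * Suc m)" and "coeff h 0 \<noteq> 0"
    and nonneg: "\<forall>z. cmod z = 1 \<longrightarrow> nonneg_real (poly h z / z ^ Suc m)"
  obtains a b h\<^sub>2 \<kappa> where "h = [:-a, 1:] * ([:-b, 1:] * h\<^sub>2)" "degree h\<^sub>2 \<le> 2 * m"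
    "\<And>z. cmod z = 1 \<Longrightarrow> (z - a) * (z - b) / z = \<kappa> * complex_of_real ((cmod (z - a))\<^sup>2)"
proof -
  have "\<not> (\<exists>a l. a \<noteq> 0 \<and> l = 0 \<and> h = pCons a l)"
    using deg by auto
  then obtain a where "poly h a = 0"
    using fundamental_theorem_of_algebra_alt by blast
  then obtain g where g: "h = [:-a, 1:] * g"
    by (metis dvdE poly_eq_0_iff_dvd)
  have "a \<noteq> 0"
    using \<open>poly h a = 0\<close> \<open>coeff h 0 \<noteq> 0\<close> by (auto simp: poly_0_coeff_0)
  have degree: "degree h\<^sub>2 \<le> 2 * m" if "h = [:-a, 1:] * ([:-b, 1:] * h\<^sub>2)" for b h\<^sub>2
  proof -
    have "h\<^sub>2 \<noteq> 0"
      using that deg by auto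
    then have "degree h = Suc (Suc (degree h\<^sub>2))"
      unfolding that by (simp add: degree_mult_eq del: mult_pCons_left)
    then show ?thesis
      using deg by simp
  qed
  show ?thesis
  proof (cases "cmod a = 1")
    case True
    have "poly g a = 0"
      by (rule root_on_circle_double[OF True g nonneg])
    then obtain h\<^sub>2 where "g = [:-a, 1:] * h\<^sub>2"
      by (metis dvdE poly_eq_0_iff_dvd)
    then have h: "h = [:-a, 1:] * ([:-a, 1:] * h\<^sub>2)"
      using g by simp
    show ?thesis
      by (rule that[OF h degree[OF h]]) (rule double_factor_on_circle[OF _ True])
  next
    case False
    define b where "b = inverse (cnj a)"
    have "poly h b = 0"
      using reflected_root[OF sym _ \<open>poly h a = 0\<close> \<open>a \<noteq> 0\<close>] deg by (simp add: b_def)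
    moreover have "b \<noteq> a"
      using inverse_cnj_neq_self[OF \<open>a \<noteq> 0\<close> False] by (simp add: b_def)
    ultimately have "poly g b = 0"
      using g by simp
    then obtain h\<^sub>2 where "g = [:-b, 1:] * h\<^sub>2"
      by (metis dvdE poly_eq_0_iff_dvd)
    then have h: "h = [:-a, 1:] * ([:-b, 1:] * h\<^sub>2)"
      using g by simp
    show ?thesis
      by (rule that[OF h degree[OF h]]) (unfold b_def, rule reflected_factor_on_circle[OF _ \<open>a \<noteq> 0\<close>])
  qed
qed

lemma nonneg_real_cancel_square:
  assumes nonneg: "\<forall>z. cmod z = 1 \<longrightarrow> nonneg_real (f z)"
    and split: "\<And>z. cmod z = 1 \<Longrightarrow> f z = complex_of_real ((cmod (z - a))\<^sup>2) * (poly g z / z ^ m)"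
  shows "\<forall>z. cmod z = 1 \<longrightarrow> nonneg_real (poly g z / z ^ m)"
proof -
  have "nonneg_real (poly g z / z ^ m)" if z: "cmod z = 1" and "z \<noteq> a" for z
  proof -
    have pos: "(cmod (z - a))\<^sup>2 > 0"
      using \<open>z \<noteq> a\<close> by simp
    then have "poly g z / z ^ m = f z / complex_of_real ((cmod (z - a))\<^sup>2)"
      using split[OF z] by (simp add: field_simps del: of_real_power)
    then show ?thesis
      using nonneg_real_divide[OF _ pos, of "f z"] nonneg z by simp
  qed
  then show ?thesis
    using nonneg_real_at_point[of a g m] by blast
qed

lemma fejer_riesz_step:
  assumes IH: "\<And>h. degree h \<le> 2 * m \<Longrightarrow> \<forall>z. cmod z = 1 \<longrightarrow> nonneg_real (poly h z / z ^ m) \<Longrightarrow>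
      \<exists>q. degree q \<le> m \<and> (\<forall>z. cmod z = 1 \<longrightarrow> complex_of_real ((cmod (poly q z))\<^sup>2) = poly h z / z ^ m)"
    and h: "h = [:-a, 1:] * ([:-b, 1:] * h\<^sub>2)" and deg: "degree h\<^sub>2 \<le> 2 * m"
    and factor: "\<And>z. cmod z = 1 \<Longrightarrow> (z - a) * (z - b) / z = \<kappa> * complex_of_real ((cmod (z - a))\<^sup>2)"
    and nonneg: "\<forall>z. cmod z = 1 \<longrightarrow> nonneg_real (poly h z / z ^ Suc m)"
  shows "\<exists>q. degree q \<le> Suc m \<and>
    (\<forall>z. cmod z = 1 \<longrightarrow> complex_of_real ((cmod (poly q z))\<^sup>2) = poly h z / z ^ Suc m)"
proof -
  define h\<^sub>3 where "h\<^sub>3 = smult \<kappa> h\<^sub>2"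
  have split: "poly h z / z ^ Suc m = complex_of_real ((cmod (z - a))\<^sup>2) * (poly h\<^sub>3 z / z ^ m)"
    if z: "cmod z = 1" for z
  proof -
    have "z \<noteq> 0"
      using z by auto
    then have "poly h z / z ^ Suc m = ((z - a) * (z - b) / z) * (poly h\<^sub>2 z / z ^ m)"
      unfolding h by (simp add: field_simps)
    then show ?thesis
      unfolding factor[OF z] h\<^sub>3_def by simp
  qed
  have "\<forall>z. cmod z = 1 \<longrightarrow> nonneg_real (poly h\<^sub>3 z / z ^ m)"
    using nonneg split by (rule nonneg_real_cancel_square)
  moreover have "degree h\<^sub>3 \<le> 2 * m"
    unfolding h\<^sub>3_def by (rule order_trans[OF degree_smult_le deg])
  ultimately obtain q where q: "degree q \<le> m"
    "\<forall>z. cmod z = 1 \<longrightarrow> complex_of_real ((cmod (poly q z))\<^sup>2) = poly h\<^sub>3 z / z ^ m"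
    using IH by blast
  have "degree ([:-a, 1:] * q) \<le> Suc m"
    using degree_mult_le[of "[:-a, 1:]" q] q(1) by simp
  moreover have "complex_of_real ((cmod (poly ([:-a, 1:] * q) z))\<^sup>2) = poly h z / z ^ Suc m"
    if z: "cmod z = 1" for z
  proof -
    have "poly ([:-a, 1:] * q) z = (z - a) * poly q z"
      by (simp add: algebra_simps)
    then have "complex_of_real ((cmod (poly ([:-a, 1:] * q) z))\<^sup>2) =
        complex_of_real ((cmod (z - a))\<^sup>2) * complex_of_real ((cmod (poly q z))\<^sup>2)"
      by (simp only: norm_mult power_mult_distrib of_real_mult)
    then show ?thesis
      using q(2) z split[OF z] by simp
  qed
  ultimately show ?thesis
    by blast
qed

lemma self_reciprocal_divide_by_z:
  assumes deg: "degree h \<le> 2 * Suc m" and sym: "h = conj_reflect h (2 * Suc m)" and "coeff h 0 = 0"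
  obtains h\<^sub>1 where "degree h\<^sub>1 \<le> 2 * m" "\<And>z. z \<noteq> 0 \<Longrightarrow> poly h z / z ^ Suc m = poly h\<^sub>1 z / z ^ m"
proof -
  obtain h\<^sub>1 where h: "h = pCons 0 h\<^sub>1"
    using \<open>coeff h 0 = 0\<close> by (cases h) auto
  have "coeff h (2 * Suc m) = cnj (coeff h 0)"
    using arg_cong[OF sym, of "\<lambda>p. coeff p (2 * Suc m)"] by (simp add: coeff_conj_reflect)
  moreover have "degree h \<le> Suc (Suc (2 * m))"
    using deg by simp
  ultimately have "degree h \<le> Suc (2 * m)"
    using \<open>coeff h 0 = 0\<close> by (simp add: degree_le_if_top_coeff_0)
  then have "degree h\<^sub>1 \<le> 2 * m"
    unfolding h by (cases "h\<^sub>1 = 0") auto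
  moreover have "poly h z / z ^ Suc m = poly h\<^sub>1 z / z ^ m" if "z \<noteq> 0" for z
    using that unfolding h by simp
  ultimately show ?thesis
    using that by blast
qed

lemma fejer_riesz:
  "degree h \<le> 2 * m \<Longrightarrow> \<forall>z. cmod z = 1 \<longrightarrow> nonneg_real (poly h z / z ^ m) \<Longrightarrow>
   \<exists>q. degree q \<le> m \<and> (\<forall>z. cmod z = 1 \<longrightarrow> complex_of_real ((cmod (poly q z))\<^sup>2) = poly h z / z ^ m)"
proof (induction m arbitrary: h)
  case 0
  define c where "c = coeff h 0"
  have h: "h = [:c:]"
    unfolding c_def using "0.prems"(1) degree_0_id[of h] by simp
  have "nonneg_real c"
    using "0.prems"(2)[rule_format, of 1] h by simp
  then show ?case
    using h by (intro exI[of _ "[:complex_of_real (sqrt (Re c)):]"]) (simp add: nonneg_real_def complex_eq_iff)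
next
  case (Suc m)
  have deg: "degree h \<le> 2 * Suc m" and nonneg: "\<forall>z. cmod z = 1 \<longrightarrow> nonneg_real (poly h z / z ^ Suc m)"
    using Suc.prems by auto
  have sym: "h = conj_reflect h (2 * Suc m)"
    using nonneg by (intro self_reciprocal_if_real_on_circle[OF deg]) (auto simp: nonneg_real_def)
  show ?case
  proof (cases "coeff h 0 = 0")
    case True
    obtain h\<^sub>1 where "degree h\<^sub>1 \<le> 2 * m" and shift: "\<And>z. z \<noteq> 0 \<Longrightarrow> poly h z / z ^ Suc m = poly h\<^sub>1 z / z ^ m"
      using self_reciprocal_divide_by_z[OF deg sym True] by metis
    have shift_circle: "poly h z / z ^ Suc m = poly h\<^sub>1 z / z ^ m" if "cmod z = 1" for z
      using that by (intro shift) auto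
    then have "\<forall>z. cmod z = 1 \<longrightarrow> nonneg_real (poly h\<^sub>1 z / z ^ m)"
      using nonneg by metis
    then obtain q where "degree q \<le> m"
      "\<forall>z. cmod z = 1 \<longrightarrow> complex_of_real ((cmod (poly q z))\<^sup>2) = poly h\<^sub>1 z / z ^ m"
      using Suc.IH[OF \<open>degree h\<^sub>1 \<le> 2 * m\<close>] by blast
    then show ?thesis
      using shift_circle by (intro exI[of _ q]) (simp del: power_Suc)
  next
    case False
    have "coeff h (2 * Suc m) = cnj (coeff h 0)"
      using arg_cong[OF sym, of "\<lambda>p. coeff p (2 * Suc m)"] by (simp add: coeff_conj_reflect)
    then have deg_h: "degree h = 2 * Suc m"
      using deg False by (metis le_antisym le_degree complex_cnj_zero_iff)
    obtain a b h\<^sub>2 \<kappa> where h: "h = [:-a, 1:] * ([:-b, 1:] * h\<^sub>2)" and deg\<^sub>2: "degree h\<^sub>2 \<le> 2 * m"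
      and factor: "\<And>z. cmod z = 1 \<Longrightarrow> (z - a) * (z - b) / z = \<kappa> * complex_of_real ((cmod (z - a))\<^sup>2)"
      using nonneg_real_factor_pair[OF deg_h sym False nonneg] by metis
    show ?thesis
      using Suc.IH by (rule fejer_riesz_step[OF _ h deg\<^sub>2 factor nonneg])
  qed
qed

section \<open>Block encoding of circulant matrices\<close>

text \<open>Fejer--Riesz applied to \<open>1 - |P|\<^sup>2 = (z ^ d - P P\<^sup>*) / z ^ d\<close>, where \<open>P\<^sup>* = conj_reflect P d\<close>.\<close>

lemma complementary_polynomial:
  assumes deg_P: "degree P \<le> d" and bound: "\<forall>z. cmod z = 1 \<longrightarrow> cmod (poly P z) \<le> 1"
  obtains Q where "degree Q \<le> d" "\<forall>z. cmod z = 1 \<longrightarrow> (cmod (poly P z))\<^sup>2 + (cmod (poly Q z))\<^sup>2 = 1"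
proof -
  define h where "h = monom 1 d - P * conj_reflect P d"
  have "degree (P * conj_reflect P d) \<le> 2 * d"
    using degree_mult_le[of P "conj_reflect P d"] deg_P degree_conj_reflect[of P d] by simp
  then have deg_h: "degree h \<le> 2 * d"
    unfolding h_def using degree_diff_le degree_monom_le[of "1::complex" d] by (metis le_trans mult_2 le_add1)
  have h: "poly h z / z ^ d = complex_of_real (1 - (cmod (poly P z))\<^sup>2)" if z: "cmod z = 1" for z
  proof -
    have "z \<noteq> 0"
      using z by auto
    have "poly h z = z ^ d - poly P z * (z ^ d * cnj (poly P z))"
      unfolding h_def using poly_conj_reflect_on_circle[OF z deg_P] by (simp add: poly_monom)
    then have "poly h z / z ^ d = 1 - cnj (poly P z) * poly P z"
      using \<open>z \<noteq> 0\<close> by (simp add: field_simps)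
    then show ?thesis
      by (simp only: of_real_diff of_real_1 of_real_cmod_square)
  qed
  then have "\<forall>z. cmod z = 1 \<longrightarrow> nonneg_real (poly h z / z ^ d)"
    using bound by (simp add: nonneg_real_def power_le_one)
  then obtain Q where Q: "degree Q \<le> d"
    "\<forall>z. cmod z = 1 \<longrightarrow> complex_of_real ((cmod (poly Q z))\<^sup>2) = poly h z / z ^ d"
    using fejer_riesz[OF deg_h] by blast
  have "complex_of_real ((cmod (poly Q z))\<^sup>2) = complex_of_real (1 - (cmod (poly P z))\<^sup>2)"
    if "cmod z = 1" for z
    using Q(2) h that by simp
  then have "\<forall>z. cmod z = 1 \<longrightarrow> (cmod (poly P z))\<^sup>2 + (cmod (poly Q z))\<^sup>2 = 1"
    unfolding of_real_eq_iff by simp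
  with Q(1) show ?thesis
    by (rule that)
qed

lemma qsp_polynomial_exists:
  fixes K :: real
  assumes K: "K > 0" and bound: "\<forall>z. cmod z = 1 \<longrightarrow> cmod (\<Sum>k\<le>d. c k * z ^ k) \<le> K"
  shows "\<exists>Rs. length Rs = Suc d \<and> (\<forall>R\<in>set Rs. unitary_mat 2 R) \<and>
     (\<forall>z. cmod z = 1 \<longrightarrow> qsp_matrix Rs z 0 0 = (\<Sum>k\<le>d. c k * z ^ k) / K)"
proof -
  define P where "P = smult (1 / complex_of_real K) (\<Sum>k\<le>d. monom (c k) k)"
  have poly_P: "poly P z = (\<Sum>k\<le>d. c k * z ^ k) / K" for z
    unfolding P_def by (simp add: poly_sum poly_monom)
  have deg_P: "degree P \<le> d"
    unfolding P_def
    by (rule order_trans[OF degree_smult_le]) (intro degree_sum_le, auto intro: order_trans[OF degree_monom_le])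
  have "\<forall>z. cmod z = 1 \<longrightarrow> cmod (poly P z) \<le> 1"
    using bound K by (simp add: poly_P norm_divide)
  then obtain Q where "degree Q \<le> d" "\<forall>z. cmod z = 1 \<longrightarrow> (cmod (poly P z))\<^sup>2 + (cmod (poly Q z))\<^sup>2 = 1"
    using complementary_polynomial[OF deg_P] by blast
  then obtain Rs where "length Rs = Suc d" "\<forall>R\<in>set Rs. unitary_mat 2 R"
    "\<forall>z. cmod z = 1 \<longrightarrow> qsp_matrix Rs z 0 0 = poly P z \<and> qsp_matrix Rs z 1 0 = poly Q z"
    using unit_pair_qsp[OF deg_P] by blast
  then show ?thesis
    using poly_P by auto
qed

lemma circ_norm_upper:
  assumes "cmod z = 1"
  shows "cmod (\<Sum>k\<le>d. c k * z ^ k) \<le> circ_norm d c"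
proof -
  have "cmod (\<Sum>k\<le>d. c k * w ^ k) \<le> (\<Sum>k\<le>d. cmod (c k))" if "w \<in> {w. cmod w = 1}" for w
    using that norm_sum[of "\<lambda>k. c k * w ^ k"] by (simp add: norm_mult norm_power)
  then have "bdd_above ((\<lambda>z. cmod (\<Sum>k\<le>d. c k * z ^ k)) ` {z. cmod z = 1})"
    by (rule bdd_aboveI2)
  then show ?thesis
    unfolding circ_norm_def using assms by (intro cSUP_upper) auto
qed

lemma circ_norm_pos:
  assumes "\<exists>k\<le>d. c k \<noteq> 0"
  shows "circ_norm d c > 0"
proof -
  define p where "p = (\<Sum>k\<le>d. monom (c k) k)"
  obtain k where "k \<le> d" "c k \<noteq> 0"
    using assms by auto
  then have "coeff p k \<noteq> 0"
    unfolding p_def by (simp add: coeff_sum)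
  then have "p \<noteq> 0"
    by auto
  then obtain z where z: "cmod z = 1" "poly p z \<noteq> 0"
    using poly_eq_0_if_vanishes_on_circle by blast
  then have "0 < cmod (\<Sum>k\<le>d. c k * z ^ k)"
    unfolding p_def by (simp add: poly_sum poly_monom)
  also have "\<dots> \<le> circ_norm d c"
    by (rule circ_norm_upper[OF z(1)])
  finally show ?thesis .
qed

lemma mat_pow_cyc_shift:
  "1 \<le> N \<Longrightarrow> mat_pow N (cyc_shift N) m i j = (if i < N \<and> j < N \<and> i = (j + m) mod N then 1 else 0)"
proof (induction m arbitrary: i j)
  case (Suc m)
  have "mat_pow N (cyc_shift N) (Suc m) i j =
      (\<Sum>k<N. cyc_shift N i k * (if k < N \<and> j < N \<and> k = (j + m) mod N then 1 else 0))"
    using Suc by (simp add: mat_mult_def)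
  also have "\<dots> = (\<Sum>k<N. if k = (j + m) mod N then (if j < N then cyc_shift N i ((j + m) mod N) else 0) else 0)"
    by (rule sum.cong) auto
  also have "\<dots> = (if i < N \<and> j < N \<and> i = (j + Suc m) mod N then 1 else 0)"
    using Suc.prems by (auto simp: cyc_shift_def mod_Suc_eq)
  finally show ?case .
qed (auto simp: mat_id_def)

text \<open>The circuit realises \<open>F V F\<^sup>*\<close>, where \<open>F = qft_stage n n\<close> is the Fourier transform with
  bit-reversed columns and \<open>V\<close> applies \<open>qsp_matrix Rs (omega n ^ bitrev n k)\<close> to the ancilla when the
  register holds \<open>k\<close>; its top-left block is \<open>F diag(P(omega n ^ bitrev n k)) F\<^sup>*\<close>, that is, the
  circulant matrix of the polynomial \<open>P(z) = qsp_matrix Rs z 0 0\<close>.\<close>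

definition circulant_circuit :: "nat \<Rightarrow> cmat list \<Rightarrow> cmat list" where
  "circulant_circuit n Rs = rev (qft_gates n) @ qsp_gates n Rs @ map adjoint (qft_gates n)"

lemma elementary_circulant_circuit:
  "\<forall>R\<in>set Rs. unitary_mat 2 R \<Longrightarrow> g \<in> set (circulant_circuit n Rs) \<Longrightarrow> elementary_gate (Suc n) g"
  unfolding circulant_circuit_def using elementary_qft_gates elementary_qsp_gates by auto

lemma length_circulant_circuit:
  assumes "1 \<le> n" "length Rs = Suc d"
  shows "length (circulant_circuit n Rs) \<le> 3 * (d * n + n\<^sup>2)"
proof -
  have "length (circulant_circuit n Rs) \<le> n * n + (Suc d + d * n) + n * n"
    unfolding circulant_circuit_def using length_qft_gates[of n] length_qsp_gates[of n Rs] assms(2) by simp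
  moreover have "d \<le> d * n" "1 \<le> n * n"
    using assms(1) by simp_all
  ultimately show ?thesis
    unfolding power2_eq_square Suc_eq_plus1 distrib_left by linarith
qed

lemma circuit_matrix_circulant_circuit:
  assumes "1 \<le> n" "Rs \<noteq> []"
  shows "circuit_matrix (Suc n) (circulant_circuit n Rs) =
    mat_mult (2 ^ Suc n) (qft_stage n n) (mat_mult (2 ^ Suc n) (qsp_block_diag n Rs) (adjoint (qft_stage n n)))"
proof -
  have adjoint_gates: "\<forall>g\<in>set (map adjoint (qft_gates n)). row_bounded (2 ^ Suc n) g"
    using bounded_qft_gates by (auto intro: row_bounded_adjoint)
  have "circuit_matrix (Suc n) (map adjoint (qft_gates n)) = adjoint (qft_stage n n)"
    using adjoint_circuit_matrix[of "rev (qft_gates n)" "Suc n"] bounded_qft_gates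
      circuit_matrix_qft_gates[OF assms(1)] by (simp add: rev_map)
  moreover have "\<forall>g\<in>set (qsp_gates n Rs @ map adjoint (qft_gates n)). row_bounded (2 ^ Suc n) g"
    using adjoint_gates row_bounded_qsp_gates by auto
  ultimately show ?thesis
    unfolding circulant_circuit_def
    using circuit_matrix_append[OF adjoint_gates, of "qsp_gates n Rs"]
      circuit_matrix_qft_gates[OF assms(1)] circuit_matrix_qsp_gates[OF assms(2)]
    by (simp add: circuit_matrix_append del: power_Suc)
qed

lemma circulant_eq_dft_sum:
  assumes i: "i < 2 ^ n" and j: "j < 2 ^ n"
  shows "circulant (2 ^ n) d c i j =
    (\<Sum>k<2 ^ n. cnj (omega n) ^ (i * k) * (\<Sum>m\<le>d. c m * (omega n ^ k) ^ m) * omega n ^ (j * k)) / 2 ^ n"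
proof -
  have "(\<Sum>k<2 ^ n. cnj (omega n) ^ (i * k) * (\<Sum>m\<le>d. c m * (omega n ^ k) ^ m) * omega n ^ (j * k)) =
      (\<Sum>k<2 ^ n. \<Sum>m\<le>d. c m * (cnj (omega n) ^ (i * k) * omega n ^ ((m + j) * k)))"
    by (intro sum.cong refl)
      (simp add: sum_distrib_left sum_distrib_right power_add power_mult[symmetric] algebra_simps)
  also have "\<dots> = (\<Sum>m\<le>d. c m * (\<Sum>k<2 ^ n. cnj (omega n) ^ (i * k) * omega n ^ ((m + j) * k)))"
    by (simp add: sum_distrib_left sum.swap[of _ "{..<2 ^ n}"])
  also have "\<dots> = (\<Sum>m\<le>d. c m * (if (m + j) mod 2 ^ n = i then 2 ^ n else 0))"
    by (simp add: sum_roots_of_unity[OF i])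
  also have "\<dots> = circulant (2 ^ n) d c i j * 2 ^ n"
    unfolding circulant_def sum_distrib_right
    by (intro sum.cong refl) (use i j in \<open>auto simp: mat_pow_cyc_shift add.commute\<close>)
  finally show ?thesis
    by simp
qed

lemma qft_stage_final_norm:
  assumes "1 \<le> n" "i < 2 ^ n" "k < 2 ^ n" "j < 2 ^ n"
  shows "qft_stage n n i k * cnj (qft_stage n n j k) =
    cnj (omega n) ^ (i * bitrev n k) * omega n ^ (j * bitrev n k) / 2 ^ n"
proof -
  have "qft_stage n n i k * cnj (qft_stage n n j k) =
      cnj (omega n) ^ (i * bitrev n k) * omega n ^ (j * bitrev n k) * (inv_sqrt2 * inv_sqrt2) ^ n"
    unfolding qft_stage_final[OF assms(1,2,3)] qft_stage_final[OF assms(1,4,3)] zeta_def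
    by (simp add: power_mult_distrib)
  also have "(inv_sqrt2 * inv_sqrt2) ^ n = 1 / 2 ^ n"
    by (simp add: inv_sqrt2_square power_one_over)
  finally show ?thesis
    by simp
qed

lemma circulant_circuit_entry:
  assumes n: "1 \<le> n" and "Rs \<noteq> []" and i: "i < 2 ^ n" and j: "j < 2 ^ n"
  shows "circuit_matrix (Suc n) (circulant_circuit n Rs) i j =
    (\<Sum>k<2 ^ n. cnj (omega n) ^ (i * k) * qsp_matrix Rs (omega n ^ k) 0 0 * omega n ^ (j * k)) / 2 ^ n"
proof -
  let ?F = "qft_stage n n" and ?V = "qsp_block_diag n Rs"
  have inner: "(\<Sum>l<2 ^ Suc n. ?V k l * cnj (?F j l)) = qsp_matrix Rs (omega n ^ bitrev n k) 0 0 * cnj (?F j k)"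
    if k: "k < 2 ^ n" for k
  proof -
    have "(\<Sum>l<2 ^ Suc n. ?V k l * cnj (?F j l)) = (\<Sum>l<2 ^ n. ?V k l * cnj (?F j l))"
      using qft_stage_final_eq_0[OF j] by (intro sum.mono_neutral_right) auto
    also have "\<dots> = (\<Sum>l<2 ^ n. if l = k then qsp_matrix Rs (omega n ^ bitrev n k) 0 0 * cnj (?F j k) else 0)"
      using k bit_eq_0_if_less_power[OF k, of n] bit_eq_0_if_less_power[of _ n n]
      by (intro sum.cong refl) (auto simp: qsp_block_diag_def)
    finally show ?thesis
      using k by simp
  qed
  have "circuit_matrix (Suc n) (circulant_circuit n Rs) i j =
      (\<Sum>k<2 ^ Suc n. ?F i k * (\<Sum>l<2 ^ Suc n. ?V k l * cnj (?F j l)))"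
    unfolding circuit_matrix_circulant_circuit[OF n \<open>Rs \<noteq> []\<close>] by (simp add: mat_mult_def adjoint_def)
  also have "\<dots> = (\<Sum>k<2 ^ n. ?F i k * (\<Sum>l<2 ^ Suc n. ?V k l * cnj (?F j l)))"
    using qft_stage_final_eq_0[OF i] by (intro sum.mono_neutral_right) auto
  also have "\<dots> = (\<Sum>k<2 ^ n. cnj (omega n) ^ (i * bitrev n k) * qsp_matrix Rs (omega n ^ bitrev n k) 0 0
      * omega n ^ (j * bitrev n k) / 2 ^ n)"
  proof (intro sum.cong refl)
    fix k :: nat
    assume "k \<in> {..<2 ^ n}"
    then have k: "k < 2 ^ n"
      by simp
    show "?F i k * (\<Sum>l<2 ^ Suc n. ?V k l * cnj (?F j l)) = cnj (omega n) ^ (i * bitrev n k) *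
        qsp_matrix Rs (omega n ^ bitrev n k) 0 0 * omega n ^ (j * bitrev n k) / 2 ^ n"
    proof -
      have "?F i k * (\<Sum>l<2 ^ Suc n. ?V k l * cnj (?F j l)) =
          (?F i k * cnj (?F j k)) * qsp_matrix Rs (omega n ^ bitrev n k) 0 0"
        unfolding inner[OF k] by (simp only: ac_simps)
      then show ?thesis
        unfolding qft_stage_final_norm[OF n i k j] by simp
    qed
  qed
  also have "\<dots> = (\<Sum>k<2 ^ n. cnj (omega n) ^ (i * k) * qsp_matrix Rs (omega n ^ k) 0 0 * omega n ^ (j * k) / 2 ^ n)"
    by (rule sum.reindex_bij_betw[OF bij_betw_bitrev])
  finally show ?thesis
    by (simp add: sum_divide_distrib)
qed

lemma circulant_circuit_top_left:
  fixes K :: real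
  assumes n: "1 \<le> n" and Rs: "Rs \<noteq> []"
    and qsp: "\<forall>z. cmod z = 1 \<longrightarrow> qsp_matrix Rs z 0 0 = (\<Sum>k\<le>d. c k * z ^ k) / K"
    and ij: "i < 2 ^ n" "j < 2 ^ n"
  shows "circuit_matrix (Suc n) (circulant_circuit n Rs) i j = circulant (2 ^ n) d c i j / K"
proof -
  have "(\<Sum>k<2 ^ n. cnj (omega n) ^ (i * k) * qsp_matrix Rs (omega n ^ k) 0 0 * omega n ^ (j * k)) =
      (\<Sum>k<2 ^ n. cnj (omega n) ^ (i * k) * (\<Sum>m\<le>d. c m * (omega n ^ k) ^ m) * omega n ^ (j * k)) / K"
    unfolding sum_divide_distrib using qsp by (intro sum.cong refl) (simp add: norm_power)
  then show ?thesis
    unfolding circulant_circuit_entry[OF n Rs ij] circulant_eq_dft_sum[OF ij] by simp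
qed

theorem lemma2:
  shows "\<exists>A::real. \<forall>(n::nat) (d::nat) (c::nat \<Rightarrow> complex).
     n \<ge> 1 \<longrightarrow> (\<exists>k\<le>d. c k \<noteq> 0) \<longrightarrow>
     (\<exists>gs. (\<forall>G\<in>set gs. elementary_gate (n + 1) G) \<and>
           real (length gs) \<le> A * (real d * real n + real n ^ 2) \<and>
           (\<forall>i j. i < 2 ^ n \<longrightarrow> j < 2 ^ n \<longrightarrow>
              circuit_matrix (n + 1) gs i j = circulant (2 ^ n) d c i j / circ_norm d c))"
proof (intro exI[of _ 3] allI impI)
  fix n d :: nat and c :: "nat \<Rightarrow> complex"
  assume n: "1 \<le> n" and c: "\<exists>k\<le>d. c k \<noteq> 0"
  obtain Rs where Rs: "length Rs = Suc d" "\<forall>R\<in>set Rs. unitary_mat 2 R"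
    "\<forall>z. cmod z = 1 \<longrightarrow> qsp_matrix Rs z 0 0 = (\<Sum>k\<le>d. c k * z ^ k) / circ_norm d c"
    using qsp_polynomial_exists[OF circ_norm_pos[OF c]] circ_norm_upper by blast
  have "real (length (circulant_circuit n Rs)) \<le> 3 * (real d * real n + real n ^ 2)"
    using of_nat_mono[OF length_circulant_circuit[OF n Rs(1)]] by simp
  moreover have "Rs \<noteq> []"
    using Rs(1) by auto
  ultimately show "\<exists>gs. (\<forall>G\<in>set gs. elementary_gate (n + 1) G) \<and>
      real (length gs) \<le> 3 * (real d * real n + real n ^ 2) \<and>
      (\<forall>i j. i < 2 ^ n \<longrightarrow> j < 2 ^ n \<longrightarrow>
        circuit_matrix (n + 1) gs i j = circulant (2 ^ n) d c i j / circ_norm d c)"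
    using elementary_circulant_circuit[OF Rs(2)] circulant_circuit_top_left[OF n _ Rs(3)]
    by (intro exI[of _ "circulant_circuit n Rs"]) auto
qed
end
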